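(* There exists a finite set of prototiles $\mathcal{F}$ in $\mathbb{R}^2$ such that for every $q\in\mathbb{N}$ there exist $q$ primitive substitution rules $\varrho_1,\dots,\varrho_q$ on $\mathcal{F}$, all with the same substitution matrix, and tilings $\mathcal{T}_1,\dots,\mathcal{T}_q$ with $\mathcal{T}_i\in\mathbb{X}_{\varrho_i}$, such that the Delone sets associated with $\mathcal{T}_1,\dots,\mathcal{T}_q$ are pairwise BD non-equivalent.
   Context: A Delone set in $\mathbb{R}^d$ is a set $\Lambda$ for which there are $r,R>0$ such that every ball of radius $r$ contains at most one point of $\Lambda$ and every ball of radius $R$ contains at least one. Two Delone sets $\Lambda,\Lambda'$ are BD equivalent if there exist $\alpha>0$ and a bijection $\phi:\Lambda\to\alpha\Lambda'$ with $\sup_{x}\|x-\phi(x)\|<\infty$. Tiles are compact sets equal to the closure of their interior; patches are tessellations of bounded sets by tiles with pairwise disjoint interiors, tilings are tessellations of $\mathbb{R}^d$. $\mathcal{F}=\{T_1,\dots,T_n\}$ is a finite set of prototiles and $\mathcal{F}^*$ the set of patches of translates of prototiles up to translation. A substitution rule with inflation factor $\xi>1$ is a map $\varrho:\mathcal{F}\to\mathcal{F}^*$ with $\operatorname{supp}\varrho(T_i)=\xi T_i$, extended to patches tile by tile ($T_i+t\mapsto\varrho(T_i)+\xi t$). $\mathbb{X}_\varrho$ is the set of tilings of $\mathbb{R}^d$ all of whose finite patches are translates of sub-patches of some $\varrho^m(T)$, $m\in\mathbb{N}$, $T\in\mathcal{F}$. The substitution matrix $M_\varrho$ has entries $a_{ij}=$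 number of tiles of type $i$ in $\varrho(T_j)$; $\varrho$ is primitive if some power of $M_\varrho$ is strictly positive. A Delone set is associated with a tiling if it is obtained by choosing one point in each tile, distinct tiles giving distinct points. *)

theory Defs
  imports "HOL-Analysis.Analysis"
begin

type_synonym pt = "real^2"

definition is_tile :: "pt set \<Rightarrow> bool" where
  "is_tile T \<longleftrightarrow> compact T \<and> T \<noteq> {} \<and> closure (interior T) = T"

text \<open>Prototiles: a finite list F of tiles; the type of a prototile is its index.
  A placed tile is a pair (i, t) meaning the translate F!i + t.\<close>
definition prototiles :: "pt set list \<Rightarrow> bool" where
  "prototiles F \<longleftrightarrow> (\<forall>T\<in>set F. is_tile T)"

definition placed :: "pt set list \<Rightarrow> nat \<times> pt \<Rightarrow> pt set" where
  "placed F p = (\<lambda>x. x + snd p) ` (F ! fst p)"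

definition supp :: "pt set list \<Rightarrow> (nat \<times> pt) set \<Rightarrow> pt set" where
  "supp F P = (\<Union>p\<in>P. placed F p)"

definition tess :: "pt set list \<Rightarrow> (nat \<times> pt) set \<Rightarrow> bool" where
  "tess F P \<longleftrightarrow> (\<forall>p\<in>P. fst p < length F) \<and>
     (\<forall>p\<in>P. \<forall>p'\<in>P. p \<noteq> p' \<longrightarrow> interior (placed F p) \<inter> interior (placed F p') = {})"

definition is_patch :: "pt set list \<Rightarrow> (nat \<times> pt) set \<Rightarrow> bool" where
  "is_patch F P \<longleftrightarrow> finite P \<and> tess F P"

definition is_tiling :: "pt set list \<Rightarrow> (nat \<times> pt) set \<Rightarrow> bool" where
  "is_tiling F P \<longleftrightarrow> tess F P \<and> supp F P = UNIV"

definition subst_rule :: "pt set list \<Rightarrow> real \<Rightarrow> (nat \<Rightarrow> (nat \<times> pt) set) \<Rightarrow> bool" where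
  "subst_rule F xi rho \<longleftrightarrow> xi > 1 \<and>
     (\<forall>i<length F. is_patch F (rho i) \<and> supp F (rho i) = (\<lambda>x. xi *\<^sub>R x) ` (F ! i))"

definition subst_ext :: "real \<Rightarrow> (nat \<Rightarrow> (nat \<times> pt) set) \<Rightarrow> (nat \<times> pt) set \<Rightarrow> (nat \<times> pt) set" where
  "subst_ext xi rho P = (\<Union>(i, t)\<in>P. (\<lambda>(j, s). (j, s + xi *\<^sub>R t)) ` rho i)"

definition translate_patch :: "pt \<Rightarrow> (nat \<times> pt) set \<Rightarrow> (nat \<times> pt) set" where
  "translate_patch v P = (\<lambda>(i, t). (i, t + v)) ` P"

definition X_subst :: "pt set list \<Rightarrow> real \<Rightarrow> (nat \<Rightarrow> (nat \<times> pt) set) \<Rightarrow> (nat \<times> pt) set set" where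
  "X_subst F xi rho = {T. is_tiling F T \<and>
     (\<forall>P. P \<subseteq> T \<and> finite P \<longrightarrow>
        (\<exists>m j v. j < length F \<and> translate_patch v P \<subseteq> (subst_ext xi rho ^^ m) {(j, 0)}))}"

definition subst_matrix :: "(nat \<Rightarrow> (nat \<times> pt) set) \<Rightarrow> nat \<Rightarrow> nat \<Rightarrow> nat" where
  "subst_matrix rho i j = card {t. (i, t) \<in> rho j}"

fun mat_pow :: "nat \<Rightarrow> (nat \<Rightarrow> nat \<Rightarrow> nat) \<Rightarrow> nat \<Rightarrow> nat \<Rightarrow> nat \<Rightarrow> nat" where
  "mat_pow n M 0 i j = (if i = j then 1 else 0)"
| "mat_pow n M (Suc k) i j = (\<Sum>l<n. mat_pow n M k i l * M l j)"

definition primitive :: "pt set list \<Rightarrow> (nat \<Rightarrow> (nat \<times> pt) set) \<Rightarrow> bool" where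
  "primitive F rho \<longleftrightarrow> (\<exists>k. \<forall>i<length F. \<forall>j<length F. mat_pow (length F) (subst_matrix rho) k i j > 0)"

definition associated_delone :: "pt set list \<Rightarrow> (nat \<times> pt) set \<Rightarrow> pt set \<Rightarrow> bool" where
  "associated_delone F T L \<longleftrightarrow> (\<exists>c. inj_on c T \<and> (\<forall>p\<in>T. c p \<in> placed F p) \<and> L = c ` T)"

definition BD_equiv :: "pt set \<Rightarrow> pt set \<Rightarrow> bool" where
  "BD_equiv L L' \<longleftrightarrow> (\<exists>\<alpha>>0. \<exists>\<phi>. bij_betw \<phi> L ((\<lambda>x. \<alpha> *\<^sub>R x) ` L') \<and>
      (\<exists>C. \<forall>x\<in>L. norm (x - \<phi> x) \<le> C))"

end

theory Submission
  imports Defs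
begin

text \<open>
  Fix Q \<ge> 1 and put N = 2Q + 3. For 0 \<le> k \<le> Q consider the substitution
  0 \<mapsto> 0 0 1^(2k) 0^(Q-k) 1^(2(Q-k)) 0^(k+1), 1 \<mapsto> 0 1^(2Q+1)
  on a long (length 2) and a short (length 1) interval. Its substitution matrix does not
  depend on k and has the eigenvalues N (left eigenvector: the lengths (2, 1)) and Q + 1
  (left eigenvector (-Q, 1)). Thickening the intervals to rectangles of height 1 and
  stacking N rows gives substitution rules in the plane, and the tiling T_k is the product of
  the fixed point of the one-dimensional substitution with \<int>.

  Since (Q + 2) * (number of tiles) = (Q + 1) * (length) + (discrepancy along (-Q, 1)),
  and the discrepancy of any prefix of the m-th supertile is O((Q + 1)^m), every window of a
  row contains (Q + 1) / (Q + 2) tiles per unit length up to an error of lower order. Counting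
  points of the Delone sets in tall rectangles, a BD map from T_k to \<alpha> T_l therefore forces
  \<alpha> = 1. Finally, the window covered by the M-th image of 0 0 1^(2k) 0^(Q-k) contains exactly
  2 (Q + 1) N^M - (Q - k) (Q + 1)^M tiles per row; for k \<noteq> l these counts differ by an
  unbounded amount, which a map of bounded displacement cannot absorb.
\<close>

section \<open>Words over a long and a short interval\<close>

definition tile_len :: "nat \<Rightarrow> nat" where
  "tile_len a = (if a = 0 then 2 else 1)"

definition seg_len :: "nat list \<Rightarrow> nat" where
  "seg_len w = sum_list (map tile_len w)"

definition disc :: "nat \<Rightarrow> nat list \<Rightarrow> int" where
  "disc Q w = sum_list (map (\<lambda>a. if a = 0 then - int Q else 1) w)"

definition infl :: "nat \<Rightarrow> nat" where
  "infl Q = 2 * Q + 3"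

definition head0 :: "nat \<Rightarrow> nat \<Rightarrow> nat list" where
  "head0 Q k = [0, 0] @ replicate (2 * k) 1 @ replicate (Q - k) 0"

definition tail0 :: "nat \<Rightarrow> nat \<Rightarrow> nat list" where
  "tail0 Q k = replicate (2 * (Q - k)) 1 @ replicate (k + 1) 0"

definition subst_letter :: "nat \<Rightarrow> nat \<Rightarrow> nat \<Rightarrow> nat list" where
  "subst_letter Q k a = (if a = 0 then head0 Q k @ tail0 Q k else 0 # replicate (2 * Q + 1) 1)"

definition subst_word :: "nat \<Rightarrow> nat \<Rightarrow> nat list \<Rightarrow> nat list" where
  "subst_word Q k w = concat (map (subst_letter Q k) w)"

definition supertile :: "nat \<Rightarrow> nat \<Rightarrow> nat \<Rightarrow> nat list" where
  "supertile Q k m = (subst_word Q k ^^ m) [0]"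

lemma tile_len_ge_1: "tile_len a \<ge> 1"
  by (simp add: tile_len_def)

lemma tile_len_le_2: "tile_len a \<le> 2"
  by (simp add: tile_len_def)

lemma seg_len_simps [simp]:
  "seg_len [] = 0" "seg_len (a # w) = tile_len a + seg_len w" "seg_len (u @ v) = seg_len u + seg_len v"
  by (auto simp: seg_len_def)

lemma disc_simps [simp]:
  "disc Q [] = 0" "disc Q (a # w) = (if a = 0 then - int Q else 1) + disc Q w"
  "disc Q (u @ v) = disc Q u + disc Q v"
  by (auto simp: disc_def)

lemma seg_len_replicate_1 [simp]: "seg_len (replicate n (Suc 0)) = n"
  by (induction n) (auto simp: tile_len_def)

lemma seg_len_replicate_0 [simp]: "seg_len (replicate n 0) = 2 * n"
  by (induction n) (auto simp: tile_len_def)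

lemma disc_replicate_1 [simp]: "disc Q (replicate n (Suc 0)) = int n"
  by (induction n) auto

lemma disc_replicate_0 [simp]: "disc Q (replicate n 0) = - int Q * int n"
  by (induction n) (auto simp: algebra_simps)

lemma length_via_seg_len_disc:
  "(int Q + 2) * int (length w) = (int Q + 1) * int (seg_len w) + disc Q w"
  by (induction w) (auto simp: tile_len_def algebra_simps)

lemma abs_disc_le: "Q \<ge> 1 \<Longrightarrow> \<bar>disc Q w\<bar> \<le> int Q * int (length w)"
proof (induction w)
  case (Cons a w)
  have "\<bar>disc Q (a # w)\<bar> \<le> \<bar>if a = 0 then - int Q else 1\<bar> + \<bar>disc Q w\<bar>"
    by (simp only: disc_simps abs_triangle_ineq)
  moreover have "\<bar>if a = 0 then - int Q else 1\<bar> \<le> int Q"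
    using Cons.prems by auto
  ultimately show ?case
    using Cons by (simp add: algebra_simps)
qed simp

lemma seg_len_take_mono:
  assumes "i \<le> j"
  shows "seg_len (take i w) \<le> seg_len (take j w)"
proof -
  have "take j w = take i w @ take (j - i) (drop i w)"
    using assms by (metis le_add_diff_inverse take_add)
  then show ?thesis
    by (metis le_add1 seg_len_simps(3))
qed

lemma seg_len_take_Suc: "i < length w \<Longrightarrow> seg_len (take (Suc i) w) = seg_len (take i w) + tile_len (w ! i)"
  by (simp add: take_Suc_conv_app_nth)

lemma take_concat_map:
  "\<exists>j u. take n (concat (map f w)) = concat (map f (take j w)) @ u \<and>
     (u = [] \<or> (\<exists>a\<in>set w. \<exists>r. u = take r (f a)))"
proof (induction w arbitrary: n)
  case (Cons a w)
  show ?case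
  proof (cases "n \<le> length (f a)")
    case True
    then show ?thesis
      by (intro exI[of _ 0] exI[of _ "take n (f a)"]) auto
  next
    case False
    obtain j u where "take (n - length (f a)) (concat (map f w)) = concat (map f (take j w)) @ u"
      "u = [] \<or> (\<exists>a\<in>set w. \<exists>r. u = take r (f a))"
      using Cons.IH by blast
    with False show ?thesis
      by (intro exI[of _ "Suc j"] exI[of _ u]) auto
  qed
qed simp

lemma subst_word_simps [simp]:
  "subst_word Q k [] = []" "subst_word Q k (a # w) = subst_letter Q k a @ subst_word Q k w"
  "subst_word Q k (u @ v) = subst_word Q k u @ subst_word Q k v"
  by (auto simp: subst_word_def)

lemma subst_word_pow_append:
  "(subst_word Q k ^^ m) (u @ v) = (subst_word Q k ^^ m) u @ (subst_word Q k ^^ m) v"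
  by (induction m) auto

lemma seg_len_subst_letter: "k \<le> Q \<Longrightarrow> seg_len (subst_letter Q k a) = infl Q * tile_len a"
  by (auto simp: subst_letter_def head0_def tail0_def infl_def tile_len_def)

lemma seg_len_subst_word: "k \<le> Q \<Longrightarrow> seg_len (subst_word Q k w) = infl Q * seg_len w"
  by (induction w) (auto simp: seg_len_subst_letter algebra_simps)

lemma seg_len_subst_word_pow: "k \<le> Q \<Longrightarrow> seg_len ((subst_word Q k ^^ m) w) = infl Q ^ m * seg_len w"
  by (induction m) (auto simp: seg_len_subst_word)

lemma disc_subst_letter:
  "k \<le> Q \<Longrightarrow> disc Q (subst_letter Q k a) = (int Q + 1) * (if a = 0 then - int Q else 1)"
  by (auto simp: subst_letter_def head0_def tail0_def algebra_simps of_nat_diff)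

lemma disc_subst_word: "k \<le> Q \<Longrightarrow> disc Q (subst_word Q k w) = (int Q + 1) * disc Q w"
  by (induction w) (auto simp: disc_subst_letter algebra_simps)

lemma disc_subst_word_pow: "k \<le> Q \<Longrightarrow> disc Q ((subst_word Q k ^^ m) w) = (int Q + 1) ^ m * disc Q w"
  by (induction m) (auto simp: disc_subst_word)

lemma set_subst_letter: "set (subst_letter Q k a) \<subseteq> {0, 1}"
  by (auto simp: subst_letter_def head0_def tail0_def)

lemma set_supertile: "set (supertile Q k m) \<subseteq> {0, 1}"
proof (induction m)
  case (Suc m)
  then show ?case
    using set_subst_letter[of Q k] by (simp add: supertile_def subst_word_def) blast
qed (simp add: supertile_def)

lemma supertile_Suc_head_tail:
  "supertile Q k (Suc m) = (subst_word Q k ^^ m) (head0 Q k) @ (subst_word Q k ^^ m) (tail0 Q k)"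
  unfolding supertile_def funpow_Suc_right comp_def
  by (simp add: subst_letter_def subst_word_pow_append)

lemma supertile_Suc_nested:
  "supertile Q k (Suc m) = supertile Q k m @ supertile Q k m @
     (subst_word Q k ^^ m) (replicate (2 * k) 1 @ replicate (Q - k) 0) @ (subst_word Q k ^^ m) (tail0 Q k)"
  unfolding supertile_Suc_head_tail head0_def
  by (simp add: subst_word_pow_append supertile_def flip: subst_word_pow_append)

lemma seg_len_supertile: "k \<le> Q \<Longrightarrow> seg_len (supertile Q k m) = 2 * infl Q ^ m"
  unfolding supertile_def by (simp add: seg_len_subst_word_pow tile_len_def)

lemma seg_len_head0: "k \<le> Q \<Longrightarrow> seg_len (head0 Q k) = 2 * Q + 4"
  by (simp add: head0_def tile_len_def)

lemma disc_head0: "k \<le> Q \<Longrightarrow> disc Q (head0 Q k) = - (int Q - int k) * (int Q + 2)"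
  by (simp add: head0_def algebra_simps of_nat_diff)

lemma length_subst_head0:
  assumes "k \<le> Q"
  shows "int (length ((subst_word Q k ^^ m) (head0 Q k))) =
    2 * (int Q + 1) * int (infl Q) ^ m - (int Q - int k) * (int Q + 1) ^ m"
proof -
  let ?w = "(subst_word Q k ^^ m) (head0 Q k)"
  have "(int Q + 2) * int (length ?w) = (int Q + 1) * int (seg_len ?w) + disc Q ?w"
    by (rule length_via_seg_len_disc)
  also have "\<dots> = (int Q + 2) * (2 * (int Q + 1) * int (infl Q) ^ m - (int Q - int k) * (int Q + 1) ^ m)"
    using assms by (simp add: seg_len_subst_word_pow disc_subst_word_pow seg_len_head0 disc_head0 algebra_simps)
  finally show ?thesis
    by simp
qed

definition piece_disc_bound :: "nat \<Rightarrow> int" where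
  "piece_disc_bound Q = int Q * (3 * int Q + 3)"

lemma piece_disc_bound_nonneg: "0 \<le> piece_disc_bound Q"
  by (simp add: piece_disc_bound_def)

lemma abs_disc_take_subst_letter:
  assumes "Q \<ge> 1" "k \<le> Q"
  shows "\<bar>disc Q (take r (subst_letter Q k a))\<bar> \<le> piece_disc_bound Q"
proof -
  have "length (take r (subst_letter Q k a)) \<le> 3 * Q + 3"
    using assms by (auto simp: subst_letter_def head0_def tail0_def)
  then have "int Q * int (length (take r (subst_letter Q k a))) \<le> piece_disc_bound Q"
    unfolding piece_disc_bound_def by (intro mult_left_mono) auto
  then show ?thesis
    using abs_disc_le[OF assms(1)] order_trans by blast
qed

text \<open>A prefix of the (m+1)-th supertile is the image of a prefix of the m-th one followed by
  a prefix of the image of a single letter.\<close>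

lemma abs_disc_take_supertile:
  assumes Q: "Q \<ge> 1" "k \<le> Q"
  shows "\<bar>disc Q (take n (supertile Q k m))\<bar> \<le> piece_disc_bound Q * (2 * (int Q + 1) ^ m - 1)"
proof (induction m arbitrary: n)
  case 0
  have "\<bar>disc Q (take n [0])\<bar> \<le> piece_disc_bound Q"
    using Q by (cases n) (auto simp: piece_disc_bound_def)
  then show ?case
    by (simp add: supertile_def)
next
  case (Suc m)
  let ?P = "piece_disc_bound Q" and ?w = "supertile Q k m"
  obtain j u where ju: "take n (supertile Q k (Suc m)) = subst_word Q k (take j ?w) @ u"
    "u = [] \<or> (\<exists>a\<in>set ?w. \<exists>r. u = take r (subst_letter Q k a))"
    using take_concat_map[of n "subst_letter Q k" ?w] by (auto simp: supertile_def subst_word_def)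
  have u: "\<bar>disc Q u\<bar> \<le> ?P"
    using ju(2) abs_disc_take_subst_letter[OF Q] by (auto simp: piece_disc_bound_def)
  have "\<bar>disc Q (take n (supertile Q k (Suc m)))\<bar> = \<bar>(int Q + 1) * disc Q (take j ?w) + disc Q u\<bar>"
    using ju(1) disc_subst_word[OF Q(2)] by simp
  also have "\<dots> \<le> \<bar>(int Q + 1) * disc Q (take j ?w)\<bar> + \<bar>disc Q u\<bar>"
    by (rule abs_triangle_ineq)
  also have "\<dots> = (int Q + 1) * \<bar>disc Q (take j ?w)\<bar> + \<bar>disc Q u\<bar>"
    by (simp add: abs_mult)
  also have "\<dots> \<le> (int Q + 1) * (?P * (2 * (int Q + 1) ^ m - 1)) + ?P"
    using Suc.IH[of j] u by (intro add_mono mult_left_mono) auto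
  also have "\<dots> \<le> ?P * (2 * (int Q + 1) ^ Suc m - 1)"
  proof -
    have "(int Q + 1) * (2 * (int Q + 1) ^ m - 1) + 1 \<le> 2 * (int Q + 1) ^ Suc m - 1"
      using Q by (simp add: algebra_simps)
    then have "?P * ((int Q + 1) * (2 * (int Q + 1) ^ m - 1) + 1) \<le> ?P * (2 * (int Q + 1) ^ Suc m - 1)"
      by (intro mult_left_mono piece_disc_bound_nonneg)
    then show ?thesis
      by (simp add: algebra_simps)
  qed
  finally show ?case .
qed

text \<open>A placed interval is a pair (letter, left endpoint); the word w is laid out from d on.\<close>

definition line_tile :: "nat list \<Rightarrow> int \<Rightarrow> nat \<Rightarrow> nat \<times> int" where
  "line_tile w d i = (w ! i, d + int (seg_len (take i w)))"

definition line_tiles :: "nat list \<Rightarrow> int \<Rightarrow> (nat \<times> int) set" where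
  "line_tiles w d = line_tile w d ` {..<length w}"

lemma line_tiles_Nil [simp]: "line_tiles [] d = {}"
  by (simp add: line_tiles_def)

lemma line_tiles_Cons: "line_tiles (a # w) d = insert (a, d) (line_tiles w (d + int (tile_len a)))"
  by (simp only: line_tiles_def length_Cons lessThan_Suc_eq_insert_0 image_insert image_image)
    (simp add: line_tile_def algebra_simps)

lemma line_tiles_append: "line_tiles (u @ v) d = line_tiles u d \<union> line_tiles v (d + int (seg_len u))"
  by (induction u arbitrary: d) (auto simp: line_tiles_Cons algebra_simps)

lemma line_tiles_shift: "(b, x) \<in> line_tiles w (d + c) \<longleftrightarrow> (b, x - c) \<in> line_tiles w d"
  by (auto simp: line_tiles_def line_tile_def image_iff algebra_simps)

lemma line_tiles_bounds:
  "(a, x) \<in> line_tiles w d \<Longrightarrow> d \<le> x \<and> x + int (tile_len a) \<le> d + int (seg_len w)"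
proof (induction w arbitrary: d)
  case (Cons b w)
  then show ?case
    using tile_len_ge_1[of b] by (fastforce simp: line_tiles_Cons)
qed simp

lemma line_tiles_letter: "(a, x) \<in> line_tiles w d \<Longrightarrow> a \<in> set w"
  by (auto simp: line_tiles_def line_tile_def)

lemma finite_line_tiles [simp]: "finite (line_tiles w d)"
  by (simp add: line_tiles_def)

lemma line_tiles_Cons_notin: "(a, d) \<notin> line_tiles w (d + int (tile_len a))"
  using line_tiles_bounds[of a d w "d + int (tile_len a)"] tile_len_ge_1[of a] by auto

lemma card_line_tiles: "card (line_tiles w d) = length w"
  by (induction w arbitrary: d) (simp_all add: line_tiles_Cons line_tiles_Cons_notin)

lemma card_line_tiles_type: "card {x. (i, x) \<in> line_tiles w d} = count_list w i"
proof (induction w arbitrary: d)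
  case (Cons a w)
  let ?rest = "{x. (i, x) \<in> line_tiles w (d + int (tile_len a))}"
  show ?case
  proof (cases "i = a")
    case True
    have "finite ?rest"
      by (rule finite_subset[of _ "snd ` line_tiles w (d + int (tile_len a))"]) force+
    moreover have "{x. (i, x) \<in> line_tiles (a # w) d} = insert d ?rest" "d \<notin> ?rest"
      using True line_tiles_Cons_notin by (auto simp: line_tiles_Cons)
    ultimately show ?thesis
      using True Cons.IH by simp
  next
    case False
    then have "{x. (i, x) \<in> line_tiles (a # w) d} = ?rest"
      by (auto simp: line_tiles_Cons)
    then show ?thesis
      using False Cons.IH by simp
  qed
qed simp

lemma line_tiles_sep:
  assumes "p \<in> line_tiles w d" "p' \<in> line_tiles w d" "p \<noteq> p'"
  shows "snd p + int (tile_len (fst p)) \<le> snd p' \<or> snd p' + int (tile_len (fst p')) \<le> snd p"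
  using assms
proof (induction w arbitrary: d)
  case (Cons a w)
  let ?rest = "line_tiles w (d + int (tile_len a))"
  consider "p = (a, d)" "p' \<in> ?rest" | "p' = (a, d)" "p \<in> ?rest" | "p \<in> ?rest" "p' \<in> ?rest"
    using Cons.prems by (auto simp: line_tiles_Cons)
  then show ?case
  proof cases
    case 1
    then show ?thesis using line_tiles_bounds[of "fst p'" "snd p'"] by auto
  next
    case 2
    then show ?thesis using line_tiles_bounds[of "fst p" "snd p"] by auto
  next
    case 3
    then show ?thesis using Cons.IH Cons.prems(3) by blast
  qed
qed simp

lemma line_tiles_cover:
  assumes "w \<noteq> []" "real_of_int d \<le> u" "u \<le> real_of_int d + real (seg_len w)"
  shows "\<exists>(a, x)\<in>line_tiles w d. real_of_int x \<le> u \<and> u \<le> real_of_int x + real (tile_len a)"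
  using assms
proof (induction w arbitrary: d)
  case (Cons a w)
  show ?case
  proof (cases "u \<le> real_of_int d + real (tile_len a)")
    case True
    then show ?thesis using Cons.prems by (auto simp: line_tiles_Cons)
  next
    case False
    then have "w \<noteq> []" using Cons.prems by auto
    then show ?thesis
      using Cons.IH[of "d + int (tile_len a)"] Cons.prems False by (auto simp: line_tiles_Cons)
  qed
qed simp

lemma line_tiles_subst_word:
  assumes "k \<le> Q"
  shows "(\<Union>(a, x)\<in>line_tiles w d. line_tiles (subst_letter Q k a) (int (infl Q) * x)) =
    line_tiles (subst_word Q k w) (int (infl Q) * d)"
proof (induction w arbitrary: d)
  case (Cons a w)
  show ?case
    using Cons.IH[of "d + int (tile_len a)"]
    by (simp add: line_tiles_Cons line_tiles_append seg_len_subst_letter[OF assms] algebra_simps)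
qed simp

lemma mem_line_tiles_subst_word:
  assumes "k \<le> Q"
  shows "(b, x) \<in> line_tiles (subst_word Q k w) (int (infl Q) * d) \<longleftrightarrow>
    (\<exists>a y y'. (a, y) \<in> line_tiles w d \<and> (b, y') \<in> line_tiles (subst_letter Q k a) 0 \<and>
      x = y' + int (infl Q) * y)"
  unfolding line_tiles_subst_word[OF assms, symmetric]
  using line_tiles_shift[of b x _ 0] by force

section \<open>The one-dimensional tilings\<close>

text \<open>
  Since the image of 0 begins with 0 0, the m-th supertile is the second block of the
  (m+1)-th one. Placing the m-th supertile on the interval starting at
  supertile_start Q m = -2 (1 + N + ... + N^(m-1)) makes these placements nested, and their
  union tiles the whole line.
\<close>

definition supertile_start :: "nat \<Rightarrow> nat \<Rightarrow> int" where
  "supertile_start Q m = - 2 * (\<Sum>j<m. int (infl Q) ^ j)"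

definition line_tiling :: "nat \<Rightarrow> nat \<Rightarrow> (nat \<times> int) set" where
  "line_tiling Q k = (\<Union>m. line_tiles (supertile Q k m) (supertile_start Q m))"

lemma supertile_start_Suc: "supertile_start Q (Suc m) = supertile_start Q m - 2 * int (infl Q) ^ m"
  by (simp add: supertile_start_def algebra_simps)

lemma supertile_start_nonpos: "supertile_start Q m \<le> 0"
  by (simp add: supertile_start_def sum_nonneg)

lemma infl_pow_Suc_ge: "3 * int (infl Q) ^ m \<le> int (infl Q) ^ Suc m"
  by (simp add: infl_def)

lemma minus_supertile_start_less: "- supertile_start Q m < int (infl Q) ^ m"
proof (induction m)
  case (Suc m)
  then show ?case
    using infl_pow_Suc_ge[of Q m] by (simp add: supertile_start_Suc)
qed (simp add: supertile_start_def)

lemma supertile_start_Suc_bounds: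
  "supertile_start Q (Suc m) \<le> - 2 * int (infl Q) ^ m"
  "2 * int (infl Q) ^ m \<le> supertile_start Q (Suc m) + 2 * int (infl Q) ^ Suc m"
proof -
  show "supertile_start Q (Suc m) \<le> - 2 * int (infl Q) ^ m"
    using supertile_start_nonpos[of Q m] by (simp add: supertile_start_Suc)
  show "2 * int (infl Q) ^ m \<le> supertile_start Q (Suc m) + 2 * int (infl Q) ^ Suc m"
    using infl_pow_Suc_ge[of Q m] minus_supertile_start_less[of Q m] supertile_start_Suc[of Q m]
      zero_le_power[of "int (infl Q)" m] by linarith
qed

lemma ex_infl_pow_ge: "\<exists>m. R \<le> 2 * real (infl Q) ^ m"
proof -
  obtain m where m: "R \<le> real m"
    using real_arch_simple by blast
  have "m < 2 ^ m"
    by (rule less_exp)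
  also have "2 ^ m \<le> infl Q ^ m"
    by (rule power_mono) (auto simp: infl_def)
  finally have "real m \<le> real (infl Q) ^ m"
    by (metis less_imp_le of_nat_le_iff of_nat_power)
  then show ?thesis
    using m by (intro exI[of _ m]) linarith
qed

lemma supertile_start_covers:
  assumes "R \<le> 2 * real (infl Q) ^ m"
  shows "real_of_int (supertile_start Q (Suc m)) \<le> - R"
    and "R \<le> real_of_int (supertile_start Q (Suc m)) + 2 * real (infl Q) ^ Suc m"
proof -
  have "real_of_int (supertile_start Q (Suc m)) \<le> real_of_int (- 2 * int (infl Q) ^ m)"
    using supertile_start_Suc_bounds(1)[of Q m] by (simp only: of_int_le_iff)
  then show "real_of_int (supertile_start Q (Suc m)) \<le> - R"
    using assms by simp
  have "real_of_int (2 * int (infl Q) ^ m) \<le> real_of_int (supertile_start Q (Suc m) + 2 * int (infl Q) ^ Suc m)"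
    using supertile_start_Suc_bounds(2)[of Q m] by (simp only: of_int_le_iff)
  then show "R \<le> real_of_int (supertile_start Q (Suc m)) + 2 * real (infl Q) ^ Suc m"
    using assms by simp
qed

lemma ex_supertile_covering:
  "\<exists>m. real_of_int (supertile_start Q m) \<le> a \<and> b \<le> real_of_int (supertile_start Q m) + 2 * real (infl Q) ^ m"
proof -
  obtain m where "max \<bar>a\<bar> \<bar>b\<bar> \<le> 2 * real (infl Q) ^ m"
    using ex_infl_pow_ge by blast
  from supertile_start_covers[OF this] show ?thesis
    by (intro exI[of _ "Suc m"]) auto
qed

lemma line_tiles_supertile_Suc:
  assumes "k \<le> Q"
  shows "line_tiles (supertile Q k m) (supertile_start Q m) \<subseteq>
    line_tiles (supertile Q k (Suc m)) (supertile_start Q (Suc m))"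
proof -
  have "supertile_start Q (Suc m) + int (seg_len (supertile Q k m)) = supertile_start Q m"
    using seg_len_supertile[OF assms] by (simp add: supertile_start_Suc)
  then show ?thesis
    unfolding supertile_Suc_nested[of Q k m] line_tiles_append by auto
qed

lemma line_tiles_supertile_mono:
  assumes "k \<le> Q" "m \<le> M"
  shows "line_tiles (supertile Q k m) (supertile_start Q m) \<subseteq> line_tiles (supertile Q k M) (supertile_start Q M)"
  using assms(2)
proof (induction M rule: dec_induct)
  case (step M)
  then show ?case
    using line_tiles_supertile_Suc[OF assms(1), of M] by blast
qed simp

lemma supertile_decomp:
  assumes "k \<le> Q" "m \<le> M"
  shows "\<exists>U V. supertile Q k M = U @ supertile Q k m @ V \<and>
    supertile_start Q M + int (seg_len U) = supertile_start Q m"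
  using assms(2)
proof (induction M rule: dec_induct)
  case base
  then show ?case
    by (intro exI[of _ "[]"]) auto
next
  case (step M)
  then obtain U V where UV: "supertile Q k M = U @ supertile Q k m @ V"
    "supertile_start Q M + int (seg_len U) = supertile_start Q m"
    by blast
  have "supertile_start Q (Suc M) + int (seg_len (supertile Q k M)) = supertile_start Q M"
    using seg_len_supertile[OF assms(1)] by (simp add: supertile_start_Suc)
  then show ?case
    using UV unfolding supertile_Suc_nested[of Q k M]
    by (intro exI[of _ "supertile Q k M @ U"]
        exI[of _ "V @ (subst_word Q k ^^ M) (replicate (2 * k) 1 @ replicate (Q - k) 0) @
          (subst_word Q k ^^ M) (tail0 Q k)"]) auto
qed

lemma line_tiling_in_supertile:
  assumes k: "k \<le> Q" and p: "(a, x) \<in> line_tiling Q k" and lo: "supertile_start Q m \<le> x"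
    and hi: "x + int (tile_len a) \<le> supertile_start Q m + 2 * int (infl Q) ^ m"
  shows "(a, x) \<in> line_tiles (supertile Q k m) (supertile_start Q m)"
proof -
  obtain M0 where "(a, x) \<in> line_tiles (supertile Q k M0) (supertile_start Q M0)"
    using p by (auto simp: line_tiling_def)
  then have p': "(a, x) \<in> line_tiles (supertile Q k (max M0 m)) (supertile_start Q (max M0 m))"
    using line_tiles_supertile_mono[OF k, of M0 "max M0 m"] by auto
  obtain U V where UV: "supertile Q k (max M0 m) = U @ supertile Q k m @ V"
    "supertile_start Q (max M0 m) + int (seg_len U) = supertile_start Q m"
    using supertile_decomp[OF k, of m "max M0 m"] by auto
  have len: "int (seg_len (supertile Q k m)) = 2 * int (infl Q) ^ m"
    using seg_len_supertile[OF k] by simp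
  show ?thesis
    using p' unfolding UV(1) line_tiles_append
  proof (elim UnE)
    assume "(a, x) \<in> line_tiles U (supertile_start Q (max M0 m))"
    from line_tiles_bounds[OF this] have False
      using UV(2) lo tile_len_ge_1[of a] by linarith
    then show ?thesis ..
  next
    assume "(a, x) \<in> line_tiles V (supertile_start Q (max M0 m) + int (seg_len U) +
      int (seg_len (supertile Q k m)))"
    from line_tiles_bounds[OF this] have False
      using UV(2) hi len tile_len_ge_1[of a] by linarith
    then show ?thesis ..
  qed (use UV(2) in auto)
qed

lemma line_tiling_sep:
  assumes "k \<le> Q" "p \<in> line_tiling Q k" "p' \<in> line_tiling Q k" "p \<noteq> p'"
  shows "snd p + int (tile_len (fst p)) \<le> snd p' \<or> snd p' + int (tile_len (fst p')) \<le> snd p"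
proof -
  obtain m m' where "p \<in> line_tiles (supertile Q k m) (supertile_start Q m)"
    "p' \<in> line_tiles (supertile Q k m') (supertile_start Q m')"
    using assms(2,3) by (auto simp: line_tiling_def)
  then have "p \<in> line_tiles (supertile Q k (max m m')) (supertile_start Q (max m m'))"
    "p' \<in> line_tiles (supertile Q k (max m m')) (supertile_start Q (max m m'))"
    using line_tiles_supertile_mono[OF assms(1), of m "max m m'"]
      line_tiles_supertile_mono[OF assms(1), of m' "max m m'"] by auto
  then show ?thesis
    using line_tiles_sep assms(4) by blast
qed

lemma line_tiling_letter:
  assumes "(a, x) \<in> line_tiling Q k"
  shows "a < 2"
proof -
  obtain m where "(a, x) \<in> line_tiles (supertile Q k m) (supertile_start Q m)"
    using assms by (auto simp: line_tiling_def)
  then have "a \<in> set (supertile Q k m)"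
    by (rule line_tiles_letter)
  then show "a < 2"
    using set_supertile by fastforce
qed

lemma line_tiling_cover:
  assumes k: "k \<le> Q"
  shows "\<exists>(a, x)\<in>line_tiling Q k. real_of_int x \<le> u \<and> u \<le> real_of_int x + real (tile_len a)"
proof -
  obtain m where m: "real_of_int (supertile_start Q m) \<le> u"
    "u \<le> real_of_int (supertile_start Q m) + 2 * real (infl Q) ^ m"
    using ex_supertile_covering by blast
  have "seg_len (supertile Q k m) = 2 * infl Q ^ m"
    using seg_len_supertile[OF k] .
  moreover have "supertile Q k m \<noteq> []"
    using calculation by (auto simp: infl_def)
  ultimately have "\<exists>(a, x)\<in>line_tiles (supertile Q k m) (supertile_start Q m).
      real_of_int x \<le> u \<and> u \<le> real_of_int x + real (tile_len a)"
    using m by (intro line_tiles_cover) simp_all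
  then show ?thesis
    unfolding line_tiling_def by blast
qed

section \<open>Counting intervals in windows\<close>

definition separated :: "(nat \<times> int) set \<Rightarrow> bool" where
  "separated S \<longleftrightarrow> (\<forall>p\<in>S. \<forall>p'\<in>S. p \<noteq> p' \<longrightarrow>
     snd p + int (tile_len (fst p)) \<le> snd p' \<or> snd p' + int (tile_len (fst p')) \<le> snd p)"

definition tiles_within :: "(nat \<times> int) set \<Rightarrow> real \<Rightarrow> real \<Rightarrow> (nat \<times> int) set" where
  "tiles_within S a b = {p\<in>S. a \<le> real_of_int (snd p) \<and> real_of_int (snd p) + real (tile_len (fst p)) \<le> b}"

definition tiles_meeting :: "(nat \<times> int) set \<Rightarrow> real \<Rightarrow> real \<Rightarrow> (nat \<times> int) set" where
  "tiles_meeting S a b = {p\<in>S. real_of_int (snd p) \<le> b \<and> a \<le> real_of_int (snd p) + real (tile_len (fst p))}"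

lemma separated_line_tiles: "separated (line_tiles w d)"
  unfolding separated_def using line_tiles_sep by blast

lemma separated_line_tiling: "k \<le> Q \<Longrightarrow> separated (line_tiling Q k)"
  unfolding separated_def using line_tiling_sep by blast

lemma tiles_meeting_subset: "tiles_meeting S a b \<subseteq> tiles_within S (a - 2) (b + 2)"
proof
  fix p assume "p \<in> tiles_meeting S a b"
  moreover have "real (tile_len (fst p)) \<le> 2"
    using tile_len_le_2 by simp
  ultimately show "p \<in> tiles_within S (a - 2) (b + 2)"
    by (auto simp: tiles_meeting_def tiles_within_def)
qed

lemma inj_on_snd_separated:
  assumes "separated S"
  shows "inj_on snd S"
proof (rule inj_onI)
  fix p p' assume p: "p \<in> S" "p' \<in> S" "snd p = snd p'"
  show "p = p'"
  proof (rule ccontr)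
    assume "p \<noteq> p'"
    with assms p have "snd p + int (tile_len (fst p)) \<le> snd p' \<or> snd p' + int (tile_len (fst p')) \<le> snd p"
      unfolding separated_def by blast
    then show False
      using p(3) tile_len_ge_1[of "fst p"] tile_len_ge_1[of "fst p'"] by linarith
  qed
qed

lemma snd_tiles_within_subset: "snd ` tiles_within S a b \<subseteq> {\<lceil>a\<rceil> .. \<lfloor>b\<rfloor> - 1}"
proof
  fix x assume "x \<in> snd ` tiles_within S a b"
  then obtain c where "(c, x) \<in> tiles_within S a b"
    by force
  then have "a \<le> real_of_int x" "real_of_int (x + 1) \<le> b"
    using tile_len_ge_1[of c] by (auto simp: tiles_within_def)
  then have "\<lceil>a\<rceil> \<le> x" "x + 1 \<le> \<lfloor>b\<rfloor>"
    by (simp_all only: ceiling_le_iff le_floor_iff)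
  then show "x \<in> {\<lceil>a\<rceil> .. \<lfloor>b\<rfloor> - 1}"
    by simp
qed

lemma inj_on_snd_tiles_within: "separated S \<Longrightarrow> inj_on snd (tiles_within S a b)"
  by (rule inj_on_subset[OF inj_on_snd_separated]) (auto simp: tiles_within_def)

lemma finite_tiles_within: "separated S \<Longrightarrow> finite (tiles_within S a b)"
  using finite_subset[OF snd_tiles_within_subset] by (blast intro: finite_imageD inj_on_snd_tiles_within)

lemma finite_tiles_meeting: "separated S \<Longrightarrow> finite (tiles_meeting S a b)"
  using finite_tiles_within tiles_meeting_subset finite_subset by metis

lemma card_tiles_meeting_le:
  "separated S \<Longrightarrow> card (tiles_meeting S a b) \<le> card (tiles_within S (a - 2) (b + 2))"
  by (rule card_mono[OF finite_tiles_within tiles_meeting_subset])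

lemma card_tiles_within_le_width:
  assumes S: "separated S" and ab: "a \<le> b"
  shows "real (card (tiles_within S a b)) \<le> b - a"
proof -
  have "card (tiles_within S a b) = card (snd ` tiles_within S a b)"
    using inj_on_snd_tiles_within[OF S] by (simp add: card_image)
  also have "\<dots> \<le> card {\<lceil>a\<rceil> .. \<lfloor>b\<rfloor> - 1}"
    by (rule card_mono[OF _ snd_tiles_within_subset]) simp
  finally have "real (card (tiles_within S a b)) \<le> real (nat (\<lfloor>b\<rfloor> - \<lceil>a\<rceil>))"
    by simp
  also have "\<dots> \<le> b - a"
  proof (cases "\<lceil>a\<rceil> \<le> \<lfloor>b\<rfloor>")
    case True
    then have "real (nat (\<lfloor>b\<rfloor> - \<lceil>a\<rceil>)) = real_of_int \<lfloor>b\<rfloor> - real_of_int \<lceil>a\<rceil>"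
      by simp
    then show ?thesis
      using of_int_floor_le[of b] le_of_int_ceiling[of a] by linarith
  next
    case False
    then show ?thesis
      using ab by simp
  qed
  finally show ?thesis .
qed

lemma separated_straddle_unique:
  assumes S: "separated S" and p: "p \<in> S" "real_of_int (snd p) < s" "s < real_of_int (snd p) + real (tile_len (fst p))"
    and p': "p' \<in> S" "real_of_int (snd p') < s" "s < real_of_int (snd p') + real (tile_len (fst p'))"
  shows "p = p'"
proof (rule ccontr)
  assume "p \<noteq> p'"
  with S p(1) p'(1) have "snd p + int (tile_len (fst p)) \<le> snd p' \<or> snd p' + int (tile_len (fst p')) \<le> snd p"
    unfolding separated_def by blast
  then have "real_of_int (snd p + int (tile_len (fst p))) \<le> real_of_int (snd p') \<or>
      real_of_int (snd p' + int (tile_len (fst p'))) \<le> real_of_int (snd p)"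
    by (simp only: of_int_le_iff)
  then show False
    using p p' by auto
qed

lemma card_tiles_within_split:
  assumes S: "separated S"
  shows "card (tiles_within S a b) \<le> card (tiles_within S a s) + card (tiles_within S s b) + 1"
proof -
  define St where "St = {p\<in>tiles_within S a b. real_of_int (snd p) < s \<and> s < real_of_int (snd p) + real (tile_len (fst p))}"
  have "finite St"
    using finite_tiles_within[OF S] by (auto simp: St_def)
  moreover have "\<forall>p\<in>St. \<forall>p'\<in>St. p = p'"
    using separated_straddle_unique[OF S] by (auto simp: St_def tiles_within_def)
  ultimately have St: "card St \<le> Suc 0"
    using card_le_Suc0_iff_eq by blast
  have "tiles_within S a b \<subseteq> tiles_within S a s \<union> tiles_within S s b \<union> St"
    unfolding St_def tiles_within_def by auto
  then have "card (tiles_within S a b) \<le> card (tiles_within S a s \<union> tiles_within S s b \<union> St)"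
    using finite_tiles_within[OF S] \<open>finite St\<close> by (intro card_mono) auto
  also have "\<dots> \<le> card (tiles_within S a s) + card (tiles_within S s b) + card St"
    by (meson card_Un_le add_le_mono le_refl order_trans)
  finally show ?thesis
    using St by linarith
qed

text \<open>
  For a word laid out from d, the intervals ending by t form a prefix of the word;
  length_via_seg_len_disc expresses its number of letters by its length and its discrepancy.
\<close>

definition ended_by :: "nat list \<Rightarrow> int \<Rightarrow> real \<Rightarrow> nat set" where
  "ended_by w d t = {i. i < length w \<and> real_of_int d + real (seg_len (take (Suc i) w)) \<le> t}"

lemma ended_by_eq_lessThan: "ended_by w d t = {..<card (ended_by w d t)}"
proof -
  let ?E = "ended_by w d t"
  have fin: "finite ?E"
    unfolding ended_by_def by auto
  have down: "j \<in> ?E" if "i \<in> ?E" "j \<le> i" for i j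
  proof -
    have "seg_len (take (Suc j) w) \<le> seg_len (take (Suc i) w)"
      using that(2) by (intro seg_len_take_mono) simp
    then show ?thesis
      using that unfolding ended_by_def by auto
  qed
  show ?thesis
  proof (intro set_eqI iffI)
    fix i assume "i \<in> ?E"
    then have "{..i} \<subseteq> ?E"
      using down by auto
    then have "card {..i} \<le> card ?E"
      using fin by (intro card_mono) auto
    then show "i \<in> {..<card ?E}"
      by simp
  next
    fix i assume i: "i \<in> {..<card ?E}"
    show "i \<in> ?E"
    proof (rule ccontr)
      assume "i \<notin> ?E"
      then have "?E \<subseteq> {..<i}"
        using down by (meson lessThan_iff not_le_imp_less subsetI)
      then have "card ?E \<le> i"
        by (metis card_lessThan card_mono finite_lessThan)
      then show False
        using i by simp
    qed
  qed
qed

lemma card_ended_by_le: "card (ended_by w d t) \<le> length w"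
proof -
  have "ended_by w d t \<subseteq> {..<length w}"
    by (auto simp: ended_by_def)
  then show ?thesis
    by (metis card_lessThan card_mono finite_lessThan)
qed

lemma card_ended_by_bounds:
  assumes n: "n = card (ended_by w d t)"
  shows "n \<ge> 1 \<Longrightarrow> real_of_int d + real (seg_len (take n w)) \<le> t"
    and "n < length w \<Longrightarrow> t < real_of_int d + real (seg_len (take (Suc n) w))"
proof -
  assume "n \<ge> 1"
  then have "n - 1 \<in> ended_by w d t"
    by (subst ended_by_eq_lessThan) (simp add: n[symmetric])
  then show "real_of_int d + real (seg_len (take n w)) \<le> t"
    unfolding ended_by_def using \<open>n \<ge> 1\<close> by auto
next
  assume "n < length w"
  have "n \<notin> ended_by w d t"
    by (subst ended_by_eq_lessThan) (simp add: n[symmetric])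
  then show "t < real_of_int d + real (seg_len (take (Suc n) w))"
    unfolding ended_by_def using \<open>n < length w\<close> by auto
qed

lemma card_ended_by_via_disc:
  "(real Q + 2) * real (card (ended_by w d t)) =
    (real Q + 1) * real (seg_len (take (card (ended_by w d t)) w)) + real_of_int (disc Q (take (card (ended_by w d t)) w))"
proof -
  let ?n = "card (ended_by w d t)"
  have "length (take ?n w) = ?n"
    using card_ended_by_le[of w d t] by simp
  then have "(int Q + 2) * int ?n = (int Q + 1) * int (seg_len (take ?n w)) + disc Q (take ?n w)"
    using length_via_seg_len_disc[of Q "take ?n w"] by simp
  then have "real_of_int ((int Q + 2) * int ?n) = real_of_int ((int Q + 1) * int (seg_len (take ?n w)) + disc Q (take ?n w))"
    by (rule arg_cong)
  then show ?thesis
    by simp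
qed

lemma card_ended_by_upper:
  assumes Phi: "\<And>n. \<bar>real_of_int (disc Q (take n w))\<bar> \<le> Phi" and t: "real_of_int d \<le> t"
  shows "(real Q + 2) * real (card (ended_by w d t)) \<le> (real Q + 1) * (t - real_of_int d) + Phi"
proof -
  let ?n = "card (ended_by w d t)"
  have "real (seg_len (take ?n w)) \<le> t - real_of_int d"
  proof (cases "?n \<ge> 1")
    case True
    then show ?thesis
      using card_ended_by_bounds(1)[OF refl True] by linarith
  next
    case False
    then have "?n = 0"
      by linarith
    then show ?thesis
      using t by simp
  qed
  then have "(real Q + 1) * real (seg_len (take ?n w)) \<le> (real Q + 1) * (t - real_of_int d)"
    by (intro mult_left_mono) auto
  then show ?thesis
    using card_ended_by_via_disc[of Q w d t] Phi[of ?n] by linarith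
qed

lemma card_ended_by_lower:
  assumes Phi: "\<And>n. \<bar>real_of_int (disc Q (take n w))\<bar> \<le> Phi" and t: "t \<le> real_of_int d + real (seg_len w)"
  shows "(real Q + 1) * (t - real_of_int d - 2) - Phi \<le> (real Q + 2) * real (card (ended_by w d t))"
proof -
  let ?n = "card (ended_by w d t)"
  have "t - real_of_int d - 2 \<le> real (seg_len (take ?n w))"
  proof (cases "?n < length w")
    case True
    then show ?thesis
      using card_ended_by_bounds(2)[OF refl True] seg_len_take_Suc[OF True] tile_len_le_2[of "w ! ?n"]
      by simp
  next
    case False
    then show ?thesis
      using t by simp
  qed
  then have "(real Q + 1) * (t - real_of_int d - 2) \<le> (real Q + 1) * real (seg_len (take ?n w))"
    by (intro mult_left_mono) auto
  then show ?thesis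
    using card_ended_by_via_disc[of Q w d t] Phi[of ?n] by linarith
qed

lemma tiles_within_line_tiles_subset:
  assumes "a \<le> b"
  shows "tiles_within (line_tiles w d) a b \<subseteq> line_tile w d ` (ended_by w d b - ended_by w d a)"
proof
  fix p assume "p \<in> tiles_within (line_tiles w d) a b"
  then obtain i where i: "i < length w" "p = line_tile w d i" "a \<le> real_of_int (snd p)"
    "real_of_int (snd p) + real (tile_len (fst p)) \<le> b"
    by (auto simp: tiles_within_def line_tiles_def)
  then have "i \<in> ended_by w d b - ended_by w d a"
    using seg_len_take_Suc[OF i(1)] tile_len_ge_1[of "w ! i"] by (auto simp: ended_by_def line_tile_def)
  then show "p \<in> line_tile w d ` (ended_by w d b - ended_by w d a)"
    using i(2) by blast
qed

lemma card_tiles_within_line_tiles_le: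
  assumes Phi: "\<And>n. \<bar>real_of_int (disc Q (take n w))\<bar> \<le> Phi"
    and ad: "real_of_int d \<le> a" and ab: "a \<le> b" and bd: "b \<le> real_of_int d + real (seg_len w)"
  shows "(real Q + 2) * real (card (tiles_within (line_tiles w d) a b)) \<le> (real Q + 1) * (b - a + 2) + 2 * Phi"
proof -
  let ?Ea = "ended_by w d a" and ?Eb = "ended_by w d b"
  have fin: "finite ?Eb"
    by (simp add: ended_by_def)
  have sub: "?Ea \<subseteq> ?Eb"
    using ab by (auto simp: ended_by_def)
  have "card (tiles_within (line_tiles w d) a b) \<le> card (line_tile w d ` (?Eb - ?Ea))"
    using fin by (intro card_mono tiles_within_line_tiles_subset ab) auto
  also have "\<dots> \<le> card (?Eb - ?Ea)"
    using fin by (intro card_image_le) auto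
  also have "\<dots> = card ?Eb - card ?Ea"
    using sub fin by (intro card_Diff_subset) (auto intro: finite_subset)
  finally have "real (card (tiles_within (line_tiles w d) a b)) \<le> real (card ?Eb) - real (card ?Ea)"
    using card_mono[OF fin sub] by (simp add: of_nat_diff)
  then have "(real Q + 2) * real (card (tiles_within (line_tiles w d) a b)) \<le>
      (real Q + 2) * real (card ?Eb) - (real Q + 2) * real (card ?Ea)"
    by (simp add: right_diff_distrib[symmetric] mult_left_mono)
  moreover have "(real Q + 2) * real (card ?Eb) \<le> (real Q + 1) * (b - real_of_int d) + Phi"
    using card_ended_by_upper[OF Phi] ad ab by simp
  moreover have "(real Q + 1) * (a - real_of_int d - 2) - Phi \<le> (real Q + 2) * real (card ?Ea)"
    using card_ended_by_lower[OF Phi] ab bd by simp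
  ultimately show ?thesis
    by (simp add: algebra_simps)
qed

lemma tiles_within_line_tiles_prefix:
  "tiles_within (line_tiles (u @ v) d) (real_of_int d) (real_of_int d + real (seg_len u)) = line_tiles u d"
proof (intro equalityI subsetI)
  fix p assume p: "p \<in> tiles_within (line_tiles (u @ v) d) (real_of_int d) (real_of_int d + real (seg_len u))"
  obtain c x where cx: "p = (c, x)"
    by force
  have "real_of_int (x + int (tile_len c)) \<le> real_of_int (d + int (seg_len u))"
    using p unfolding cx tiles_within_def by simp
  then have ends: "x + int (tile_len c) \<le> d + int (seg_len u)"
    by (simp only: of_int_le_iff)
  show "p \<in> line_tiles u d"
  proof (rule ccontr)
    assume "p \<notin> line_tiles u d"
    then have "(c, x) \<in> line_tiles v (d + int (seg_len u))"
      using p unfolding cx tiles_within_def line_tiles_append by simp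
    then have "d + int (seg_len u) \<le> x"
      using line_tiles_bounds by blast
    then show False
      using ends tile_len_ge_1[of c] by linarith
  qed
next
  fix p assume "p \<in> line_tiles u d"
  moreover obtain c x where cx: "p = (c, x)"
    by force
  ultimately have "d \<le> x" "x + int (tile_len c) \<le> d + int (seg_len u)"
    using line_tiles_bounds by blast+
  then have "real_of_int d \<le> real_of_int x"
    "real_of_int (x + int (tile_len c)) \<le> real_of_int (d + int (seg_len u))"
    by (simp_all only: of_int_le_iff)
  then show "p \<in> tiles_within (line_tiles (u @ v) d) (real_of_int d) (real_of_int d + real (seg_len u))"
    using \<open>p \<in> line_tiles u d\<close> unfolding cx tiles_within_def line_tiles_append by simp
qed

lemma card_tiles_meeting_enlarged_le:
  assumes S: "separated S" and C: "C \<ge> 0" and ab: "a \<le> b"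
  shows "real (card (tiles_meeting S (a - C) (b + C))) \<le> real (card (tiles_within S a b)) + 2 * C + 6"
proof -
  let ?N = "\<lambda>a b. card (tiles_within S a b)"
  have "card (tiles_meeting S (a - C) (b + C)) \<le> ?N (a - C - 2) (b + C + 2)"
    using card_tiles_meeting_le[OF S] by simp
  also have "\<dots> \<le> ?N (a - C - 2) a + ?N a (b + C + 2) + 1"
    by (rule card_tiles_within_split[OF S])
  also have "?N a (b + C + 2) \<le> ?N a b + ?N b (b + C + 2) + 1"
    by (rule card_tiles_within_split[OF S])
  finally have "real (card (tiles_meeting S (a - C) (b + C))) \<le> real (?N (a - C - 2) a) + real (?N a b) + real (?N b (b + C + 2)) + 2"
    by linarith
  moreover have "real (?N (a - C - 2) a) \<le> C + 2"
    using card_tiles_within_le_width[OF S, of "a - C - 2" a] C by simp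
  moreover have "real (?N b (b + C + 2)) \<le> C + 2"
    using card_tiles_within_le_width[OF S, of b "b + C + 2"] C by simp
  ultimately show ?thesis
    by linarith
qed

lemma tiles_within_line_tiling_eq:
  assumes k: "k \<le> Q" and lo: "real_of_int (supertile_start Q m) \<le> a"
    and hi: "b \<le> real_of_int (supertile_start Q m) + 2 * real (infl Q) ^ m"
  shows "tiles_within (line_tiling Q k) a b = tiles_within (line_tiles (supertile Q k m) (supertile_start Q m)) a b"
proof
  show "tiles_within (line_tiling Q k) a b \<subseteq> tiles_within (line_tiles (supertile Q k m) (supertile_start Q m)) a b"
  proof
    fix p assume p: "p \<in> tiles_within (line_tiling Q k) a b"
    obtain c x where cx: "p = (c, x)"
      by force
    have "supertile_start Q m \<le> x"
      using p lo unfolding cx tiles_within_def by simp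
    moreover have "real_of_int (x + int (tile_len c)) \<le> real_of_int (supertile_start Q m + 2 * int (infl Q) ^ m)"
      using p hi unfolding cx tiles_within_def by simp
    then have "x + int (tile_len c) \<le> supertile_start Q m + 2 * int (infl Q) ^ m"
      by (simp only: of_int_le_iff)
    ultimately have "(c, x) \<in> line_tiles (supertile Q k m) (supertile_start Q m)"
      using line_tiling_in_supertile[OF k, of c x m] p unfolding cx tiles_within_def by simp
    then show "p \<in> tiles_within (line_tiles (supertile Q k m) (supertile_start Q m)) a b"
      using p unfolding cx tiles_within_def by simp
  qed
  show "tiles_within (line_tiles (supertile Q k m) (supertile_start Q m)) a b \<subseteq> tiles_within (line_tiling Q k) a b"
    unfolding tiles_within_def line_tiling_def by blast
qed

lemma card_tiles_within_line_tiling_le: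
  assumes Q: "Q \<ge> 1" and k: "k \<le> Q" and ab: "a \<le> b" and R: "max \<bar>a\<bar> \<bar>b\<bar> \<le> 2 * real (infl Q) ^ m"
  shows "(real Q + 2) * real (card (tiles_within (line_tiling Q k) a b)) \<le>
    (real Q + 1) * (b - a + 2) + 4 * real_of_int (piece_disc_bound Q) * (real Q + 1) ^ Suc m"
proof -
  let ?m = "Suc m" and ?P = "real_of_int (piece_disc_bound Q)"
  have lo: "real_of_int (supertile_start Q ?m) \<le> a"
    and hi: "b \<le> real_of_int (supertile_start Q ?m) + 2 * real (infl Q) ^ ?m"
    using supertile_start_covers[OF R] by linarith+
  have "\<bar>disc Q (take n (supertile Q k ?m))\<bar> \<le> 2 * piece_disc_bound Q * (int Q + 1) ^ ?m" for n
    using abs_disc_take_supertile[OF Q k, of n ?m] piece_disc_bound_nonneg[of Q] by (simp add: algebra_simps)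
  then have "real_of_int \<bar>disc Q (take n (supertile Q k ?m))\<bar> \<le> real_of_int (2 * piece_disc_bound Q * (int Q + 1) ^ ?m)" for n
    by (simp only: of_int_le_iff)
  then have Phi: "\<bar>real_of_int (disc Q (take n (supertile Q k ?m)))\<bar> \<le> 2 * ?P * (real Q + 1) ^ ?m" for n
    by simp
  have "b \<le> real_of_int (supertile_start Q ?m) + real (seg_len (supertile Q k ?m))"
    using hi seg_len_supertile[OF k, of ?m] by simp
  from card_tiles_within_line_tiles_le[OF Phi lo ab this]
  show ?thesis
    unfolding tiles_within_line_tiling_eq[OF k lo hi] by simp
qed

text \<open>
  The M-th image of head0 starts the (M+1)-th supertile, so it fills the window
  [window_start Q M, window_start Q M + window_width Q M]; only its number of tiles depends on k.
\<close>

definition window_start :: "nat \<Rightarrow> nat \<Rightarrow> real" where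
  "window_start Q M = real_of_int (supertile_start Q (Suc M))"

definition window_width :: "nat \<Rightarrow> nat \<Rightarrow> real" where
  "window_width Q M = real (2 * Q + 4) * real (infl Q) ^ M"

lemma window_width_nonneg: "0 \<le> window_width Q M"
  by (simp add: window_width_def)

lemma window_width_le: "window_width Q M \<le> 2 * real (infl Q) ^ Suc M"
  by (simp add: window_width_def infl_def mult_right_mono)

lemma abs_window_start_le: "\<bar>window_start Q M\<bar> \<le> real (infl Q) ^ Suc M"
proof -
  have "\<bar>supertile_start Q (Suc M)\<bar> \<le> int (infl Q) ^ Suc M"
    using minus_supertile_start_less[of Q "Suc M"] supertile_start_nonpos[of Q "Suc M"] by linarith
  then have "real_of_int \<bar>supertile_start Q (Suc M)\<bar> \<le> real_of_int (int (infl Q) ^ Suc M)"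
    by (simp only: of_int_le_iff)
  then show ?thesis
    by (simp add: window_start_def)
qed

lemma tiles_within_window_eq:
  assumes k: "k \<le> Q"
  shows "tiles_within (line_tiling Q k) (window_start Q M) (window_start Q M + window_width Q M) =
    line_tiles ((subst_word Q k ^^ M) (head0 Q k)) (supertile_start Q (Suc M))"
proof -
  have width: "window_width Q M = real (seg_len ((subst_word Q k ^^ M) (head0 Q k)))"
    using seg_len_subst_word_pow[OF k] seg_len_head0[OF k] by (simp add: window_width_def)
  have "tiles_within (line_tiling Q k) (window_start Q M) (window_start Q M + window_width Q M) =
      tiles_within (line_tiles (supertile Q k (Suc M)) (supertile_start Q (Suc M)))
        (window_start Q M) (window_start Q M + window_width Q M)"
    using window_width_le[of Q M] by (intro tiles_within_line_tiling_eq[OF k]) (simp_all add: window_start_def)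
  then show ?thesis
    unfolding supertile_Suc_head_tail width window_start_def tiles_within_line_tiles_prefix .
qed

lemma card_tiles_within_window:
  assumes "k \<le> Q"
  shows "real (card (tiles_within (line_tiling Q k) (window_start Q M) (window_start Q M + window_width Q M))) =
    2 * (real Q + 1) * real (infl Q) ^ M - (real Q - real k) * (real Q + 1) ^ M"
proof -
  have "real_of_int (int (card (tiles_within (line_tiling Q k) (window_start Q M) (window_start Q M + window_width Q M)))) =
      real_of_int (2 * (int Q + 1) * int (infl Q) ^ M - (int Q - int k) * (int Q + 1) ^ M)"
    unfolding tiles_within_window_eq[OF assms] card_line_tiles length_subst_head0[OF assms] ..
  then show ?thesis
    by simp
qed

lemma window_count_difference_bounded:
  assumes k: "k \<le> Q" and l: "l \<le> Q" and C: "C \<ge> 0"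
    and H: "real (card (tiles_within (line_tiling Q k) (window_start Q M) (window_start Q M + window_width Q M))) \<le>
      real (card (tiles_meeting (line_tiling Q l) (window_start Q M - C) (window_start Q M + window_width Q M + C)))"
  shows "(real k - real l) * (real Q + 1) ^ M \<le> 2 * C + 6"
proof -
  let ?s = "window_start Q M" and ?X = "window_width Q M"
  have "real (card (tiles_meeting (line_tiling Q l) (?s - C) (?s + ?X + C))) \<le>
      real (card (tiles_within (line_tiling Q l) ?s (?s + ?X))) + 2 * C + 6"
    using card_tiles_meeting_enlarged_le[OF separated_line_tiling[OF l] C, of ?s "?s + ?X"]
      window_width_nonneg[of Q M] by simp
  with H show ?thesis
    unfolding card_tiles_within_window[OF k] card_tiles_within_window[OF l] by (simp add: algebra_simps)
qed

lemma nonpos_of_bounded_geometric: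
  fixes D K :: real
  assumes "\<And>M::nat. D * 2 ^ M \<le> K"
  shows "D \<le> 0"
proof (rule ccontr)
  assume "\<not> D \<le> 0"
  obtain M :: nat where "K / D < 2 ^ M"
    using real_arch_pow[of 2 "K / D"] by auto
  with \<open>\<not> D \<le> 0\<close> have "K < D * 2 ^ M"
    by (simp add: field_simps)
  with assms[of M] show False
    by linarith
qed

lemma abs_scaled_window_ends_le:
  assumes C: "C \<ge> 0" and al: "\<alpha> > 0" and t: "(3 + C) / \<alpha> + 2 \<le> 2 * real (infl Q) ^ t"
  shows "\<bar>(window_start Q M - C) / \<alpha> - 2\<bar> \<le> 2 * real (infl Q) ^ (M + 1 + t)"
    and "\<bar>(window_start Q M + window_width Q M + C) / \<alpha> + 2\<bar> \<le> 2 * real (infl Q) ^ (M + 1 + t)"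
proof -
  let ?s = "window_start Q M" and ?X = "window_width Q M" and ?N = "real (infl Q) ^ Suc M"
  have N1: "1 \<le> ?N"
    by (rule one_le_power) (simp add: infl_def)
  have scaled: "\<bar>x / \<alpha>\<bar> + 2 \<le> 2 * real (infl Q) ^ (M + 1 + t)" if "\<bar>x\<bar> \<le> (3 + C) * ?N" for x
  proof -
    have "\<bar>x / \<alpha>\<bar> \<le> (3 + C) / \<alpha> * ?N"
      using that al by (simp add: abs_divide divide_right_mono)
    then have "\<bar>x / \<alpha>\<bar> + 2 \<le> ((3 + C) / \<alpha> + 2) * ?N"
      using N1 by (simp add: algebra_simps)
    also have "\<dots> \<le> 2 * real (infl Q) ^ t * ?N"
      using t N1 by (intro mult_right_mono) auto
    finally show ?thesis
      by (simp add: power_add algebra_simps)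
  qed
  have "\<bar>?s\<bar> \<le> ?N" "0 \<le> ?X" "?X \<le> 2 * ?N" "C \<le> C * ?N" "(3 + C) * ?N = 3 * ?N + C * ?N"
    using abs_window_start_le[of Q M] window_width_nonneg[of Q M] window_width_le[of Q M]
      mult_left_mono[OF N1 C] by (simp_all only: distrib_right mult_1_right)
  then have "\<bar>?s - C\<bar> \<le> (3 + C) * ?N" "\<bar>?s + ?X + C\<bar> \<le> (3 + C) * ?N"
    using C unfolding abs_le_iff by linarith+
  then show "\<bar>(?s - C) / \<alpha> - 2\<bar> \<le> 2 * real (infl Q) ^ (M + 1 + t)"
    and "\<bar>(?s + ?X + C) / \<alpha> + 2\<bar> \<le> 2 * real (infl Q) ^ (M + 1 + t)"
    using scaled abs_triangle_ineq4[of "(?s - C) / \<alpha>" 2] abs_triangle_ineq[of "(?s + ?X + C) / \<alpha>" 2]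
    by fastforce+
qed

text \<open>The window of the first tiling, enlarged by C and scaled by 1/\<alpha>, lies in a supertile
  of level M + 1 + t of the second one, where the density bound applies.\<close>

lemma card_tiles_meeting_scaled_window_le:
  assumes Q: "Q \<ge> 1" and l: "l \<le> Q" and C: "C \<ge> 0" and al: "\<alpha> > 0"
    and t: "(3 + C) / \<alpha> + 2 \<le> 2 * real (infl Q) ^ t"
  shows "(real Q + 2) * real (card (tiles_meeting (line_tiling Q l)
      ((window_start Q M - C) / \<alpha>) ((window_start Q M + window_width Q M + C) / \<alpha>))) \<le>
    (real Q + 1) * ((window_width Q M + 2 * C) / \<alpha> + 6) +
      4 * real_of_int (piece_disc_bound Q) * (real Q + 1) ^ (2 + t) * (real Q + 1) ^ M"
proof -
  let ?s = "window_start Q M" and ?X = "window_width Q M"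
  define a where "a = (?s - C) / \<alpha> - 2"
  define b where "b = (?s + ?X + C) / \<alpha> + 2"
  have R: "max \<bar>a\<bar> \<bar>b\<bar> \<le> 2 * real (infl Q) ^ (M + 1 + t)"
    using abs_scaled_window_ends_le[OF C al t, of M] unfolding a_def b_def by simp
  have "(?s - C) / \<alpha> \<le> (?s + ?X + C) / \<alpha>"
    using window_width_nonneg[of Q M] C al by (intro divide_right_mono) auto
  then have ab: "a \<le> b"
    unfolding a_def b_def by linarith
  have "card (tiles_meeting (line_tiling Q l) ((?s - C) / \<alpha>) ((?s + ?X + C) / \<alpha>)) \<le>
      card (tiles_within (line_tiling Q l) a b)"
    unfolding a_def b_def by (rule card_tiles_meeting_le[OF separated_line_tiling[OF l]])
  then have "(real Q + 2) * real (card (tiles_meeting (line_tiling Q l) ((?s - C) / \<alpha>) ((?s + ?X + C) / \<alpha>))) \<le>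
      (real Q + 2) * real (card (tiles_within (line_tiling Q l) a b))"
    by (intro mult_left_mono) auto
  also have "\<dots> \<le> (real Q + 1) * (b - a + 2) + 4 * real_of_int (piece_disc_bound Q) * (real Q + 1) ^ Suc (M + 1 + t)"
    by (rule card_tiles_within_line_tiling_le[OF Q l ab R])
  also have "b - a = (?X + 2 * C) / \<alpha> + 4"
    unfolding a_def b_def using al by (simp add: field_simps)
  also have "(real Q + 1) ^ Suc (M + 1 + t) = (real Q + 1) ^ (2 + t) * (real Q + 1) ^ M"
    by (simp add: power_add[symmetric] algebra_simps)
  finally show ?thesis
    by (simp add: algebra_simps)
qed

lemma two_pow_mult_le_window_width: "2 ^ M * (real Q + 1) ^ M \<le> (real Q + 1) * window_width Q M"
proof -
  have "(2 * (real Q + 1)) ^ M \<le> real (infl Q) ^ M"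
    by (rule power_mono) (auto simp: infl_def)
  then have "2 ^ M * (real Q + 1) ^ M \<le> real (infl Q) ^ M"
    by (simp only: power_mult_distrib)
  also have "\<dots> \<le> (real Q + 1) * window_width Q M"
  proof -
    have "1 \<le> (real Q + 1) * (2 * real Q + 4)"
      using mult_mono[of 1 "real Q + 1" 1 "2 * real Q + 4"] by simp
    then have "1 * real (infl Q) ^ M \<le> (real Q + 1) * (2 * real Q + 4) * real (infl Q) ^ M"
      by (intro mult_right_mono) auto
    then show ?thesis
      by (simp add: window_width_def mult.assoc)
  qed
  finally show ?thesis .
qed

text \<open>
  The exact count in a window of the first tiling against the density bound for the second one;
  the main terms (Q + 1) X \<alpha> and (Q + 1) X / \<alpha> survive, everything else is O((Q + 1)^M).
\<close>

lemma scaled_window_count_inequality: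
  assumes Q: "Q \<ge> 1" and k: "k \<le> Q" and l: "l \<le> Q" and C: "C \<ge> 0" and al: "\<alpha> > 0"
    and t: "(3 + C) / \<alpha> + 2 \<le> 2 * real (infl Q) ^ t"
    and H: "\<alpha> * real (card (tiles_within (line_tiling Q k) (window_start Q M) (window_start Q M + window_width Q M))) \<le>
      real (card (tiles_meeting (line_tiling Q l) ((window_start Q M - C) / \<alpha>) ((window_start Q M + window_width Q M + C) / \<alpha>)))"
  shows "(\<alpha> - 1 / \<alpha>) * ((real Q + 1) * window_width Q M) \<le>
    (\<alpha> * (real Q + 2) * real Q + (real Q + 1) * (2 * C / \<alpha> + 6) +
      4 * real_of_int (piece_disc_bound Q) * (real Q + 1) ^ (2 + t)) * (real Q + 1) ^ M"
proof -
  let ?X = "window_width Q M" and ?lam = "(real Q + 1) ^ M" and ?P = "real_of_int (piece_disc_bound Q)"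
  let ?count = "2 * (real Q + 1) * real (infl Q) ^ M - real Q * ?lam"
  have "(real Q - real k) * ?lam \<le> real Q * ?lam"
    by (intro mult_right_mono) auto
  then have "?count \<le> real (card (tiles_within (line_tiling Q k) (window_start Q M) (window_start Q M + ?X)))"
    unfolding card_tiles_within_window[OF k] by linarith
  then have "(real Q + 2) * (\<alpha> * ?count) \<le>
      (real Q + 2) * real (card (tiles_meeting (line_tiling Q l) ((window_start Q M - C) / \<alpha>) ((window_start Q M + ?X + C) / \<alpha>)))"
    using H al by (intro mult_left_mono) (auto intro: order_trans[OF mult_left_mono])
  also have "\<dots> \<le> (real Q + 1) * ((?X + 2 * C) / \<alpha> + 6) + 4 * ?P * (real Q + 1) ^ (2 + t) * ?lam"
    by (rule card_tiles_meeting_scaled_window_le[OF Q l C al t])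
  also have "(real Q + 1) * ((?X + 2 * C) / \<alpha> + 6) = (real Q + 1) * ?X / \<alpha> + (real Q + 1) * (2 * C / \<alpha> + 6)"
    using al by (simp add: field_simps)
  finally have step: "(real Q + 2) * (\<alpha> * ?count) \<le>
      (real Q + 1) * ?X / \<alpha> + (real Q + 1) * (2 * C / \<alpha> + 6) + 4 * ?P * (real Q + 1) ^ (2 + t) * ?lam" .
  have "(real Q + 2) * (\<alpha> * ?count) = \<alpha> * ((real Q + 1) * ?X) - \<alpha> * (real Q + 2) * real Q * ?lam"
    by (simp add: window_width_def algebra_simps)
  moreover have "(\<alpha> - 1 / \<alpha>) * ((real Q + 1) * ?X) = \<alpha> * ((real Q + 1) * ?X) - (real Q + 1) * ?X / \<alpha>"
    by (simp add: algebra_simps add_divide_distrib)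
  moreover have "(real Q + 1) * (2 * C / \<alpha> + 6) \<le> (real Q + 1) * (2 * C / \<alpha> + 6) * ?lam"
    using C al mult_left_mono[OF one_le_power[of "real Q + 1" M]] by simp
  ultimately show ?thesis
    using step by (simp add: algebra_simps)
qed

lemma BD_scale_le_1:
  assumes Q: "Q \<ge> 1" and k: "k \<le> Q" and l: "l \<le> Q" and C: "C \<ge> 0" and al: "\<alpha> > 0"
    and H: "\<And>M. \<alpha> * real (card (tiles_within (line_tiling Q k) (window_start Q M) (window_start Q M + window_width Q M))) \<le>
      real (card (tiles_meeting (line_tiling Q l) ((window_start Q M - C) / \<alpha>) ((window_start Q M + window_width Q M + C) / \<alpha>)))"
  shows "\<alpha> \<le> 1"
proof (rule ccontr)
  assume "\<not> \<alpha> \<le> 1"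
  then have D: "0 < \<alpha> - 1 / \<alpha>"
    using al by (simp add: field_simps less_1_mult)
  obtain t where t: "(3 + C) / \<alpha> + 2 \<le> 2 * real (infl Q) ^ t"
    using ex_infl_pow_ge by blast
  define K where "K = \<alpha> * (real Q + 2) * real Q + (real Q + 1) * (2 * C / \<alpha> + 6) +
    4 * real_of_int (piece_disc_bound Q) * (real Q + 1) ^ (2 + t)"
  have "(\<alpha> - 1 / \<alpha>) * 2 ^ M \<le> K" for M
  proof -
    have "((\<alpha> - 1 / \<alpha>) * 2 ^ M) * (real Q + 1) ^ M \<le> (\<alpha> - 1 / \<alpha>) * ((real Q + 1) * window_width Q M)"
      unfolding mult.assoc using D by (intro mult_left_mono two_pow_mult_le_window_width) simp
    also have "\<dots> \<le> K * (real Q + 1) ^ M"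
      unfolding K_def by (rule scaled_window_count_inequality[OF Q k l C al t H])
    finally show ?thesis
      by (rule mult_right_le_imp_le) simp
  qed
  then have "\<alpha> - 1 / \<alpha> \<le> 0"
    by (rule nonpos_of_bounded_geometric)
  with D show False
    by simp
qed

section \<open>Rectangles in the plane\<close>

definition vec2 :: "real \<Rightarrow> real \<Rightarrow> pt" where
  "vec2 x y = vector [x, y]"

lemma vec2_nth [simp]: "vec2 x y $ 1 = x" "vec2 x y $ 2 = y"
  by (simp_all add: vec2_def)

lemma pt_eq_iff: "(z::pt) = z' \<longleftrightarrow> z $ 1 = z' $ 1 \<and> z $ 2 = z' $ 2"
  by (metis exhaust_2 vec_eq_iff)

lemma vec2_eq_iff [simp]: "vec2 x y = vec2 x' y' \<longleftrightarrow> x = x' \<and> y = y'"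
  by (simp add: pt_eq_iff)

lemma vec2_add: "vec2 x y + vec2 x' y' = vec2 (x + x') (y + y')"
  by (simp add: pt_eq_iff)

lemma vec2_scale: "c *\<^sub>R vec2 x y = vec2 (c * x) (c * y)"
  by (simp add: pt_eq_iff)

lemma vec2_zero: "(0::pt) = vec2 0 0"
  by (simp add: pt_eq_iff)

lemma mem_cbox_pt: "z \<in> cbox (u::pt) v \<longleftrightarrow> u$1 \<le> z$1 \<and> z$1 \<le> v$1 \<and> u$2 \<le> z$2 \<and> z$2 \<le> v$2"
  unfolding mem_box_cart(2) forall_2 by auto

lemma mem_box_pt: "z \<in> box (u::pt) v \<longleftrightarrow> u$1 < z$1 \<and> z$1 < v$1 \<and> u$2 < z$2 \<and> z$2 < v$2"
  unfolding mem_box_cart(1) forall_2 by auto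

lemma is_tile_cbox: "box u v \<noteq> {} \<Longrightarrow> is_tile (cbox u v)"
  using box_subset_cbox[of u v] by (auto simp: is_tile_def)

definition rect_prototiles :: "pt set list" where
  "rect_prototiles = [cbox 0 (vec2 2 1), cbox 0 (vec2 1 1)]"

lemma length_rect_prototiles [simp]: "length rect_prototiles = 2"
  by (simp add: rect_prototiles_def)

lemma rect_prototiles_nth: "a < 2 \<Longrightarrow> rect_prototiles ! a = cbox 0 (vec2 (real (tile_len a)) 1)"
  by (cases a) (auto simp: rect_prototiles_def tile_len_def)

lemma prototiles_rect_prototiles: "prototiles rect_prototiles"
proof -
  have "box 0 (vec2 c 1) \<noteq> {}" if "c > 0" for c
    using that mem_box_pt[of "vec2 (c / 2) (1 / 2)" 0 "vec2 c 1"] by auto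
  then show ?thesis
    unfolding prototiles_def rect_prototiles_def by (auto intro: is_tile_cbox)
qed

lemma placed_rect_prototiles:
  assumes "a < 2"
  shows "placed rect_prototiles (a, vec2 x y) = cbox (vec2 x y) (vec2 (x + real (tile_len a)) (y + 1))"
proof -
  have "placed rect_prototiles (a, vec2 x y) = (\<lambda>z. vec2 x y + z) ` cbox 0 (vec2 (real (tile_len a)) 1)"
    using rect_prototiles_nth[OF assms] by (simp add: placed_def add.commute)
  also have "\<dots> = cbox (vec2 x y + 0) (vec2 x y + vec2 (real (tile_len a)) 1)"
    by (rule cbox_translation[symmetric])
  finally show ?thesis
    by (simp add: vec2_add)
qed

lemma mem_placed_rect:
  "a < 2 \<Longrightarrow> z \<in> placed rect_prototiles (a, vec2 x y) \<longleftrightarrow>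
    x \<le> z$1 \<and> z$1 \<le> x + real (tile_len a) \<and> y \<le> z$2 \<and> z$2 \<le> y + 1"
  by (simp add: placed_rect_prototiles mem_cbox_pt)

lemma mem_interior_placed_rect:
  "a < 2 \<Longrightarrow> z \<in> interior (placed rect_prototiles (a, vec2 x y)) \<longleftrightarrow>
    x < z$1 \<and> z$1 < x + real (tile_len a) \<and> y < z$2 \<and> z$2 < y + 1"
  by (simp add: placed_rect_prototiles mem_box_pt)

definition stacked :: "(nat \<times> int) set \<Rightarrow> int set \<Rightarrow> (nat \<times> pt) set" where
  "stacked S Y = {(a, vec2 (real_of_int x) (real_of_int y)) | a x y. (a, x) \<in> S \<and> y \<in> Y}"

definition two_letters :: "(nat \<times> int) set \<Rightarrow> bool" where
  "two_letters S \<longleftrightarrow> (\<forall>p\<in>S. fst p < 2)"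

lemma two_letters_line_tiling: "two_letters (line_tiling Q k)"
  unfolding two_letters_def using line_tiling_letter by force

lemma two_letters_subst_letter: "two_letters (line_tiles (subst_letter Q k a) d)"
  unfolding two_letters_def using set_subst_letter[of Q k a] by (force dest: line_tiles_letter)

lemma mem_stacked:
  "(b, z) \<in> stacked S Y \<longleftrightarrow> (\<exists>x y. (b, x) \<in> S \<and> y \<in> Y \<and> z = vec2 (real_of_int x) (real_of_int y))"
  unfolding stacked_def by auto

lemma stacked_eq_image: "stacked S Y = (\<lambda>((a, x), y). (a, vec2 (real_of_int x) (real_of_int y))) ` (S \<times> Y)"
  unfolding stacked_def by force

lemma finite_stacked: "finite S \<Longrightarrow> finite Y \<Longrightarrow> finite (stacked S Y)"
  unfolding stacked_eq_image by simp

lemma card_stacked: "card (stacked S Y) = card S * card Y"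
proof -
  have "inj_on (\<lambda>((a, x), y). (a, vec2 (real_of_int x) (real_of_int y))) (S \<times> Y)"
    by (auto simp: inj_on_def)
  then show ?thesis
    unfolding stacked_eq_image by (simp add: card_image card_cartesian_product)
qed

lemma card_stacked_type: "card {z. (i, z) \<in> stacked S Y} = card {x. (i, x) \<in> S} * card Y"
proof -
  have "{z. (i, z) \<in> stacked S Y} = (\<lambda>(x, y). vec2 (real_of_int x) (real_of_int y)) ` ({x. (i, x) \<in> S} \<times> Y)"
    unfolding stacked_def by force
  moreover have "inj_on (\<lambda>(x, y). vec2 (real_of_int x) (real_of_int y)) ({x. (i, x) \<in> S} \<times> Y)"
    by (auto simp: inj_on_def)
  ultimately show ?thesis
    by (simp add: card_image card_cartesian_product)
qed

lemma tess_stacked: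
  assumes L: "two_letters S" and Sp: "separated S"
  shows "tess rect_prototiles (stacked S Y)"
  unfolding tess_def
proof (intro conjI ballI impI)
  fix p assume "p \<in> stacked S Y"
  then show "fst p < length rect_prototiles"
    using L unfolding stacked_def two_letters_def by auto
next
  fix p p' assume p: "p \<in> stacked S Y" and p': "p' \<in> stacked S Y" and ne: "p \<noteq> p'"
  obtain a x y where axy: "p = (a, vec2 (real_of_int x) (real_of_int y))" "(a, x) \<in> S" "y \<in> Y"
    using p unfolding stacked_def by auto
  obtain a' x' y' where axy': "p' = (a', vec2 (real_of_int x') (real_of_int y'))" "(a', x') \<in> S" "y' \<in> Y"
    using p' unfolding stacked_def by auto
  have a2: "a < 2" "a' < 2"
    using L axy(2) axy'(2) unfolding two_letters_def by auto
  show "interior (placed rect_prototiles p) \<inter> interior (placed rect_prototiles p') = {}"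
  proof (rule ccontr)
    assume "interior (placed rect_prototiles p) \<inter> interior (placed rect_prototiles p') \<noteq> {}"
    then obtain z where "z \<in> interior (placed rect_prototiles p)" "z \<in> interior (placed rect_prototiles p')"
      by blast
    then have zz: "real_of_int x < z$1" "z$1 < real_of_int x + real (tile_len a)" "real_of_int y < z$2" "z$2 < real_of_int y + 1"
      and zz': "real_of_int x' < z$1" "z$1 < real_of_int x' + real (tile_len a')" "real_of_int y' < z$2" "z$2 < real_of_int y' + 1"
      unfolding axy(1) axy'(1) mem_interior_placed_rect[OF a2(1)] mem_interior_placed_rect[OF a2(2)] by auto
    have "y = y'"
      using zz(3,4) zz'(3,4) by linarith
    moreover have "(a, x) = (a', x')"
      using separated_straddle_unique[OF Sp axy(2) _ _ axy'(2)] zz(1,2) zz'(1,2) by simp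
    ultimately show False
      using ne axy(1) axy'(1) by simp
  qed
qed

lemma supp_stacked:
  assumes L: "two_letters S"
  shows "supp rect_prototiles (stacked S Y) =
    {z. (\<exists>(a, x)\<in>S. real_of_int x \<le> z$1 \<and> z$1 \<le> real_of_int x + real (tile_len a)) \<and>
      (\<exists>y\<in>Y. real_of_int y \<le> z$2 \<and> z$2 \<le> real_of_int y + 1)}"
proof (intro set_eqI iffI)
  fix z assume "z \<in> supp rect_prototiles (stacked S Y)"
  then obtain p where p: "p \<in> stacked S Y" "z \<in> placed rect_prototiles p"
    unfolding supp_def by auto
  obtain a x y where axy: "p = (a, vec2 (real_of_int x) (real_of_int y))" "(a, x) \<in> S" "y \<in> Y"
    using p unfolding stacked_def by auto
  have a2: "a < 2"
    using L axy(2) unfolding two_letters_def by auto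
  show "z \<in> {z. (\<exists>(a, x)\<in>S. real_of_int x \<le> z$1 \<and> z$1 \<le> real_of_int x + real (tile_len a)) \<and>
      (\<exists>y\<in>Y. real_of_int y \<le> z$2 \<and> z$2 \<le> real_of_int y + 1)}"
    using p(2) axy unfolding axy(1) mem_placed_rect[OF a2] by auto
next
  fix z :: pt assume "z \<in> {z. (\<exists>(a, x)\<in>S. real_of_int x \<le> z$1 \<and> z$1 \<le> real_of_int x + real (tile_len a)) \<and>
      (\<exists>y\<in>Y. real_of_int y \<le> z$2 \<and> z$2 \<le> real_of_int y + 1)}"
  then obtain a x y where axy: "(a, x) \<in> S" "real_of_int x \<le> z$1" "z$1 \<le> real_of_int x + real (tile_len a)"
    "y \<in> Y" "real_of_int y \<le> z$2" "z$2 \<le> real_of_int y + 1"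
    by auto
  have a2: "a < 2"
    using L axy(1) unfolding two_letters_def by auto
  have "z \<in> placed rect_prototiles (a, vec2 (real_of_int x) (real_of_int y))"
    unfolding mem_placed_rect[OF a2] using axy by auto
  moreover have "(a, vec2 (real_of_int x) (real_of_int y)) \<in> stacked S Y"
    using axy unfolding stacked_def by auto
  ultimately show "z \<in> supp rect_prototiles (stacked S Y)"
    unfolding supp_def by auto
qed

definition rect_rho :: "nat \<Rightarrow> nat \<Rightarrow> nat \<Rightarrow> (nat \<times> pt) set" where
  "rect_rho Q k a = stacked (line_tiles (subst_letter Q k a) 0) {0..<int (infl Q)}"

lemma int_range_mult_iff:
  assumes N: "N > 0"
  shows "(Y::int) \<in> {0..<N * h} \<longleftrightarrow> (\<exists>y y'. y \<in> {0..<h} \<and> y' \<in> {0..<N} \<and> Y = y' + N * y)"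
proof
  assume Y: "Y \<in> {0..<N * h}"
  have "Y = Y mod N + N * (Y div N)" by simp
  moreover have "Y mod N \<in> {0..<N}" using N by simp
  moreover have "Y div N \<in> {0..<h}"
  proof -
    have "0 \<le> Y div N" using Y N by (simp add: pos_imp_zdiv_nonneg_iff)
    moreover have "Y div N < h"
    proof (rule ccontr)
      assume "\<not> Y div N < h"
      then have "N * h \<le> N * (Y div N)" using N by (intro mult_left_mono) auto
      moreover have "N * (Y div N) \<le> Y" using N mult_div_mod_eq[of N Y] pos_mod_sign[of N Y] by linarith
      ultimately show False using Y by simp
    qed
    ultimately show ?thesis by simp
  qed
  ultimately show "\<exists>y y'. y \<in> {0..<h} \<and> y' \<in> {0..<N} \<and> Y = y' + N * y" by blast
next
  assume "\<exists>y y'. y \<in> {0..<h} \<and> y' \<in> {0..<N} \<and> Y = y' + N * y"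
  then obtain y y' where yy: "y \<in> {0..<h}" "y' \<in> {0..<N}" "Y = y' + N * y" by blast
  have "N * y + y' < N * y + N" using yy by simp
  also have "\<dots> = N * (y + 1)" by (simp add: algebra_simps)
  also have "\<dots> \<le> N * h" using yy N by (intro mult_left_mono) auto
  finally show "Y \<in> {0..<N * h}"
    using yy N by (simp add: add.commute)
qed

lemma mem_subst_ext_stacked:
  "(b, z) \<in> subst_ext (real (infl Q)) (rect_rho Q k) (stacked S Y) \<longleftrightarrow>
    (\<exists>a x y x' y'. (a, x) \<in> S \<and> y \<in> Y \<and> (b, x') \<in> line_tiles (subst_letter Q k a) 0 \<and>
      y' \<in> {0..<int (infl Q)} \<and> z = vec2 (real_of_int (x' + int (infl Q) * x)) (real_of_int (y' + int (infl Q) * y)))"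
  (is "?lhs \<longleftrightarrow> ?rhs")
proof
  assume ?lhs
  then obtain i t s where its: "(i, t) \<in> stacked S Y" "(b, s) \<in> rect_rho Q k i"
    "z = s + real (infl Q) *\<^sub>R t"
    unfolding subst_ext_def by auto
  obtain x y where xy: "(i, x) \<in> S" "y \<in> Y" "t = vec2 (real_of_int x) (real_of_int y)"
    using its(1) mem_stacked by blast
  obtain x' y' where xy': "(b, x') \<in> line_tiles (subst_letter Q k i) 0" "y' \<in> {0..<int (infl Q)}"
    "s = vec2 (real_of_int x') (real_of_int y')"
    using its(2) mem_stacked[of b s] unfolding rect_rho_def by blast
  show ?rhs
    using xy xy' its(3)
    by (intro exI[of _ i] exI[of _ x] exI[of _ y] exI[of _ x'] exI[of _ y']) (simp add: vec2_add vec2_scale)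
next
  assume ?rhs
  then obtain a x y x' y' where e: "(a, x) \<in> S" "y \<in> Y" "(b, x') \<in> line_tiles (subst_letter Q k a) 0"
    "y' \<in> {0..<int (infl Q)}" "z = vec2 (real_of_int (x' + int (infl Q) * x)) (real_of_int (y' + int (infl Q) * y))"
    by blast
  have "(a, vec2 (real_of_int x) (real_of_int y)) \<in> stacked S Y"
    using e by (auto simp: stacked_def)
  moreover have "(b, vec2 (real_of_int x') (real_of_int y')) \<in> rect_rho Q k a"
    using e by (auto simp: stacked_def rect_rho_def)
  moreover have "z = vec2 (real_of_int x') (real_of_int y') + real (infl Q) *\<^sub>R vec2 (real_of_int x) (real_of_int y)"
    using e(5) by (simp add: vec2_add vec2_scale)
  ultimately show ?lhs
    unfolding subst_ext_def by force
qed

lemma subst_ext_stacked: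
  assumes k: "k \<le> Q"
  shows "subst_ext (real (infl Q)) (rect_rho Q k) (stacked (line_tiles w d) {0..<h}) =
    stacked (line_tiles (subst_word Q k w) (int (infl Q) * d)) {0..<int (infl Q) * h}"
proof -
  let ?N = "int (infl Q)"
  have N: "0 < ?N"
    by (simp add: infl_def)
  show ?thesis
  proof (intro set_eqI iffI)
    fix q assume q_in: "q \<in> subst_ext (real (infl Q)) (rect_rho Q k) (stacked (line_tiles w d) {0..<h})"
    obtain b z where q: "q = (b, z)"
      by force
    from q_in obtain a x y x' y' where e: "(a, x) \<in> line_tiles w d" "y \<in> {0..<h}"
      "(b, x') \<in> line_tiles (subst_letter Q k a) 0" "y' \<in> {0..<?N}"
      "z = vec2 (real_of_int (x' + ?N * x)) (real_of_int (y' + ?N * y))"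
      unfolding q mem_subst_ext_stacked by blast
    have "(b, x' + ?N * x) \<in> line_tiles (subst_word Q k w) (?N * d)"
      unfolding mem_line_tiles_subst_word[OF k] using e(1,3) by blast
    moreover have "y' + ?N * y \<in> {0..<?N * h}"
      unfolding int_range_mult_iff[OF N] using e(2,4) by blast
    ultimately show "q \<in> stacked (line_tiles (subst_word Q k w) (?N * d)) {0..<?N * h}"
      unfolding q mem_stacked using e(5) by blast
  next
    fix q assume q_in: "q \<in> stacked (line_tiles (subst_word Q k w) (?N * d)) {0..<?N * h}"
    obtain b z where q: "q = (b, z)"
      by force
    from q_in obtain X Y where XY: "(b, X) \<in> line_tiles (subst_word Q k w) (?N * d)" "Y \<in> {0..<?N * h}"
      "z = vec2 (real_of_int X) (real_of_int Y)"
      unfolding q mem_stacked by blast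
    obtain a x x' where "(a, x) \<in> line_tiles w d" "(b, x') \<in> line_tiles (subst_letter Q k a) 0" "X = x' + ?N * x"
      using XY(1) unfolding mem_line_tiles_subst_word[OF k] by blast
    moreover obtain y y' where "y \<in> {0..<h}" "y' \<in> {0..<?N}" "Y = y' + ?N * y"
      using XY(2) unfolding int_range_mult_iff[OF N] by blast
    ultimately show "q \<in> subst_ext (real (infl Q)) (rect_rho Q k) (stacked (line_tiles w d) {0..<h})"
      unfolding q mem_subst_ext_stacked using XY(3) by blast
  qed
qed

lemma subst_ext_pow_stacked:
  assumes k: "k \<le> Q"
  shows "(subst_ext (real (infl Q)) (rect_rho Q k) ^^ m) {(0, 0)} =
    stacked (line_tiles (supertile Q k m) 0) {0..<int (infl Q) ^ m}"
proof (induction m)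
  case 0
  have "stacked (line_tiles [0] 0) {0..<1} = {(0, 0)}"
    by (auto simp: stacked_def line_tiles_def line_tile_def vec2_zero)
  then show ?case
    by (simp add: supertile_def)
next
  case (Suc m)
  have "supertile Q k (Suc m) = subst_word Q k (supertile Q k m)"
    by (simp add: supertile_def)
  then show ?case
    using subst_ext_stacked[OF k, of "supertile Q k m" 0 "int (infl Q) ^ m"] Suc by simp
qed

lemma ex_line_tile_covering_iff:
  assumes "w \<noteq> []"
  shows "(\<exists>(b, x)\<in>line_tiles w 0. real_of_int x \<le> u \<and> u \<le> real_of_int x + real (tile_len b)) \<longleftrightarrow>
    0 \<le> u \<and> u \<le> real (seg_len w)"
proof
  assume "\<exists>(b, x)\<in>line_tiles w 0. real_of_int x \<le> u \<and> u \<le> real_of_int x + real (tile_len b)"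
  then obtain b x where bx: "(b, x) \<in> line_tiles w 0" "real_of_int x \<le> u" "u \<le> real_of_int x + real (tile_len b)"
    by blast
  have "0 \<le> x" "x + int (tile_len b) \<le> int (seg_len w)"
    using line_tiles_bounds[OF bx(1)] by simp_all
  then have "0 \<le> x" "real_of_int (x + int (tile_len b)) \<le> real_of_int (int (seg_len w))"
    by (simp_all only: of_int_le_iff)
  then show "0 \<le> u \<and> u \<le> real (seg_len w)"
    using bx by simp
next
  assume "0 \<le> u \<and> u \<le> real (seg_len w)"
  then show "\<exists>(b, x)\<in>line_tiles w 0. real_of_int x \<le> u \<and> u \<le> real_of_int x + real (tile_len b)"
    using line_tiles_cover[OF assms, of 0 u] by simp
qed

lemma ex_row_covering_iff:
  assumes "1 \<le> n"
  shows "(\<exists>y\<in>{0..<n}. real_of_int y \<le> v \<and> v \<le> real_of_int y + 1) \<longleftrightarrow> 0 \<le> v \<and> v \<le> real_of_int n"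
proof
  assume "\<exists>y\<in>{0..<n}. real_of_int y \<le> v \<and> v \<le> real_of_int y + 1"
  then obtain y where "0 \<le> y" "y + 1 \<le> n" "real_of_int y \<le> v" "v \<le> real_of_int y + 1"
    by auto
  moreover from \<open>y + 1 \<le> n\<close> have "real_of_int (y + 1) \<le> real_of_int n"
    by (simp only: of_int_le_iff)
  ultimately show "0 \<le> v \<and> v \<le> real_of_int n"
    by simp
next
  assume v: "0 \<le> v \<and> v \<le> real_of_int n"
  define y where "y = min \<lfloor>v\<rfloor> (n - 1)"
  have "0 \<le> y" "y < n"
    using v assms by (auto simp: y_def)
  moreover have "real_of_int y \<le> v"
    using of_int_floor_le[of v] by (simp add: y_def) linarith
  moreover have "v \<le> real_of_int y + 1"
    using v real_of_int_floor_add_one_ge[of v] by (auto simp: y_def min_def)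
  ultimately show "\<exists>y\<in>{0..<n}. real_of_int y \<le> v \<and> v \<le> real_of_int y + 1"
    by auto
qed

lemma supp_rect_rho:
  assumes k: "k \<le> Q" and a: "a < 2"
  shows "supp rect_prototiles (rect_rho Q k a) = (\<lambda>x. real (infl Q) *\<^sub>R x) ` (rect_prototiles ! a)"
proof -
  let ?N = "real (infl Q)"
  have "(0::pt) \<in> cbox 0 (vec2 (real (tile_len a)) 1)"
    by (simp add: mem_cbox_pt)
  then have "(\<lambda>x. ?N *\<^sub>R x) ` (rect_prototiles ! a) = cbox 0 (vec2 (?N * real (tile_len a)) ?N)"
    unfolding rect_prototiles_nth[OF a] image_smult_cbox by (auto simp: vec2_scale)
  moreover have "real (seg_len (subst_letter Q k a)) = ?N * real (tile_len a)"
    using seg_len_subst_letter[OF k, of a] by simp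
  moreover have "subst_letter Q k a \<noteq> []"
    by (simp add: subst_letter_def head0_def)
  moreover have "1 \<le> int (infl Q)"
    by (simp add: infl_def)
  ultimately show ?thesis
    unfolding rect_rho_def supp_stacked[OF two_letters_subst_letter]
    by (auto simp: ex_line_tile_covering_iff ex_row_covering_iff mem_cbox_pt vec2_zero)
qed

lemma subst_rule_rect_rho: "k \<le> Q \<Longrightarrow> subst_rule rect_prototiles (real (infl Q)) (rect_rho Q k)"
  unfolding subst_rule_def is_patch_def rect_rho_def
  using supp_rect_rho[unfolded rect_rho_def] finite_stacked tess_stacked[OF two_letters_subst_letter separated_line_tiles]
  by (auto simp: infl_def)

lemma count_list_replicate: "count_list (replicate n a) x = (if a = x then n else 0)"
  by (induction n) auto

lemma count_list_subst_letter:
  "k \<le> Q \<Longrightarrow> i < 2 \<Longrightarrow> j < 2 \<Longrightarrow> count_list (subst_letter Q k j) i =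
    (if j = 0 then (if i = 0 then Q + 3 else 2 * Q) else (if i = 0 then 1 else 2 * Q + 1))"
  by (cases i; cases j) (auto simp: subst_letter_def head0_def tail0_def count_list_replicate)

lemma subst_matrix_rect_rho:
  "subst_matrix (rect_rho Q k) i j = count_list (subst_letter Q k j) i * infl Q"
  unfolding subst_matrix_def rect_rho_def card_stacked_type card_line_tiles_type by simp

lemma subst_matrix_rect_rho_indep:
  "k \<le> Q \<Longrightarrow> l \<le> Q \<Longrightarrow> i < 2 \<Longrightarrow> j < 2 \<Longrightarrow> subst_matrix (rect_rho Q k) i j = subst_matrix (rect_rho Q l) i j"
  by (simp add: subst_matrix_rect_rho count_list_subst_letter)

lemma mat_pow_Suc_0: "i < n \<Longrightarrow> mat_pow n M (Suc 0) i j = M i j"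
proof -
  assume "i < n"
  have "mat_pow n M (Suc 0) i j = (\<Sum>l<n. (if i = l then 1 else 0) * M l j)"
    by simp
  also have "\<dots> = (\<Sum>l<n. if l = i then M l j else 0)"
    by (rule sum.cong) auto
  also have "\<dots> = M i j"
    using \<open>i < n\<close> by simp
  finally show ?thesis .
qed

lemma primitive_rect_rho:
  assumes "Q \<ge> 1" "k \<le> Q"
  shows "primitive rect_prototiles (rect_rho Q k)"
  unfolding primitive_def
proof (intro exI[of _ "Suc 0"] allI impI)
  fix i j assume i: "i < length rect_prototiles" and j: "j < length rect_prototiles"
  have "mat_pow (length rect_prototiles) (subst_matrix (rect_rho Q k)) (Suc 0) i j =
      count_list (subst_letter Q k j) i * infl Q"
    using mat_pow_Suc_0[OF i] by (simp add: subst_matrix_rect_rho)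
  then show "0 < mat_pow (length rect_prototiles) (subst_matrix (rect_rho Q k)) (Suc 0) i j"
    using assms i j count_list_subst_letter[of k Q i j] by (simp add: infl_def)
qed

definition rect_tiling :: "nat \<Rightarrow> nat \<Rightarrow> (nat \<times> pt) set" where
  "rect_tiling Q k = stacked (line_tiling Q k) UNIV"

lemma is_tiling_rect_tiling:
  assumes k: "k \<le> Q"
  shows "is_tiling rect_prototiles (rect_tiling Q k)"
proof -
  have "z \<in> supp rect_prototiles (rect_tiling Q k)" for z :: pt
  proof -
    have "\<exists>(a, x)\<in>line_tiling Q k. real_of_int x \<le> z$1 \<and> z$1 \<le> real_of_int x + real (tile_len a)"
      by (rule line_tiling_cover[OF k])
    moreover have "\<exists>y\<in>(UNIV::int set). real_of_int y \<le> z$2 \<and> z$2 \<le> real_of_int y + 1"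
      using floor_correct[of "z$2"] by (intro bexI[of _ "\<lfloor>z$2\<rfloor>"]) auto
    ultimately show ?thesis
      unfolding rect_tiling_def supp_stacked[OF two_letters_line_tiling] by blast
  qed
  then show ?thesis
    unfolding is_tiling_def rect_tiling_def
    using tess_stacked[OF two_letters_line_tiling separated_line_tiling[OF k]] by auto
qed

lemma ex_uniform_index_finite:
  assumes "finite P" "\<And>p. p \<in> P \<Longrightarrow> \<exists>m::nat. A m p" "\<And>m M p. m \<le> M \<Longrightarrow> A m p \<Longrightarrow> A M p"
  shows "\<exists>M. \<forall>p\<in>P. A M p"
  using assms(1,2)
proof (induction P rule: finite_induct)
  case (insert p P)
  then obtain M m where "\<forall>p\<in>P. A M p" "A m p"
    by blast
  then have "\<forall>q\<in>insert p P. A (max M m) q"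
    using assms(3) by (metis insert_iff max.cobounded1 max.cobounded2)
  then show ?case ..
qed simp

lemma finite_patch_in_supertile:
  assumes k: "k \<le> Q" and P: "finite P" "P \<subseteq> rect_tiling Q k"
  shows "\<exists>M. \<forall>p\<in>P. \<exists>a x y. p = (a, vec2 (real_of_int x) (real_of_int y)) \<and>
    (a, x) \<in> line_tiles (supertile Q k M) (supertile_start Q M) \<and> \<bar>y\<bar> \<le> int M"
proof (rule ex_uniform_index_finite[OF P(1)])
  fix p assume "p \<in> P"
  then obtain a x y where axy: "p = (a, vec2 (real_of_int x) (real_of_int y))" "(a, x) \<in> line_tiling Q k"
    using P(2) unfolding rect_tiling_def stacked_def by auto
  then obtain m where m: "(a, x) \<in> line_tiles (supertile Q k m) (supertile_start Q m)"
    unfolding line_tiling_def by auto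
  have "(a, x) \<in> line_tiles (supertile Q k (max m (nat \<bar>y\<bar>))) (supertile_start Q (max m (nat \<bar>y\<bar>)))"
    using m line_tiles_supertile_mono[OF k, of m "max m (nat \<bar>y\<bar>)"] by auto
  moreover have "\<bar>y\<bar> \<le> int (max m (nat \<bar>y\<bar>))"
    by linarith
  ultimately show "\<exists>M a x y. p = (a, vec2 (real_of_int x) (real_of_int y)) \<and>
      (a, x) \<in> line_tiles (supertile Q k M) (supertile_start Q M) \<and> \<bar>y\<bar> \<le> int M"
    using axy(1) by blast
next
  fix m M p assume "m \<le> M" and "\<exists>a x y. p = (a, vec2 (real_of_int x) (real_of_int y)) \<and>
      (a, x) \<in> line_tiles (supertile Q k m) (supertile_start Q m) \<and> \<bar>y\<bar> \<le> int m"
  then show "\<exists>a x y. p = (a, vec2 (real_of_int x) (real_of_int y)) \<and>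
      (a, x) \<in> line_tiles (supertile Q k M) (supertile_start Q M) \<and> \<bar>y\<bar> \<le> int M"
    using line_tiles_supertile_mono[OF k] by fastforce
qed

lemma two_mult_less_infl_pow: "2 * int M < int (infl Q) ^ Suc M"
proof -
  have "M < 2 ^ M"
    by (rule less_exp)
  also have "2 ^ M \<le> infl Q ^ M"
    by (rule power_mono) (auto simp: infl_def)
  finally have "2 * M < 3 * infl Q ^ M"
    by linarith
  also have "3 * infl Q ^ M \<le> infl Q ^ Suc M"
    by (simp add: infl_def)
  finally show ?thesis
    by (metis of_nat_less_iff of_nat_mult of_nat_numeral of_nat_power)
qed

text \<open>
  A finite patch lies in the M-th supertile times [-M, M]; shifted right by one supertile
  and up by M, it lies in the (M+1)-th supertile times [0, N^(M+1)), which is the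
  (M+1)-st image of the long rectangle.
\<close>

lemma rect_tiling_legal:
  assumes k: "k \<le> Q" and P: "P \<subseteq> rect_tiling Q k" "finite P"
  shows "\<exists>m j v. j < length rect_prototiles \<and>
    translate_patch v P \<subseteq> (subst_ext (real (infl Q)) (rect_rho Q k) ^^ m) {(j, 0)}"
proof -
  obtain M where M: "\<forall>p\<in>P. \<exists>a x y. p = (a, vec2 (real_of_int x) (real_of_int y)) \<and>
      (a, x) \<in> line_tiles (supertile Q k M) (supertile_start Q M) \<and> \<bar>y\<bar> \<le> int M"
    using finite_patch_in_supertile[OF k P(2,1)] by blast
  define c where "c = 2 * int (infl Q) ^ M - supertile_start Q M"
  define v where "v = vec2 (real_of_int c) (real_of_int (int M))"
  have "translate_patch v P \<subseteq> stacked (line_tiles (supertile Q k (Suc M)) 0) {0..<int (infl Q) ^ Suc M}"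
  proof
    fix q assume "q \<in> translate_patch v P"
    then obtain p where p: "p \<in> P" "q = (fst p, snd p + v)"
      unfolding translate_patch_def by auto
    obtain a x y where axy: "p = (a, vec2 (real_of_int x) (real_of_int y))"
      "(a, x) \<in> line_tiles (supertile Q k M) (supertile_start Q M)" "\<bar>y\<bar> \<le> int M"
      using M p(1) by blast
    have q: "q = (a, vec2 (real_of_int (x + c)) (real_of_int (y + int M)))"
      using p(2) axy(1) unfolding v_def by (simp add: vec2_add)
    have "(a, x + c) \<in> line_tiles (supertile Q k M) (supertile_start Q M + c)"
      using axy(2) line_tiles_shift[of a "x + c" _ "supertile_start Q M" c] by simp
    moreover have "supertile_start Q M + c = int (seg_len (supertile Q k M))"
      unfolding c_def using seg_len_supertile[OF k, of M] by simp
    ultimately have "(a, x + c) \<in> line_tiles (supertile Q k (Suc M)) 0"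
      unfolding supertile_Suc_nested line_tiles_append by auto
    moreover have "y + int M \<in> {0..<int (infl Q) ^ Suc M}"
      using axy(3) two_mult_less_infl_pow[of M Q] by auto
    ultimately show "q \<in> stacked (line_tiles (supertile Q k (Suc M)) 0) {0..<int (infl Q) ^ Suc M}"
      unfolding q stacked_def by blast
  qed
  then show ?thesis
    using subst_ext_pow_stacked[OF k, of "Suc M"] by (intro exI[of _ "Suc M"] exI[of _ 0] exI[of _ v]) simp
qed

lemma rect_tiling_in_X_subst: "k \<le> Q \<Longrightarrow> rect_tiling Q k \<in> X_subst rect_prototiles (real (infl Q)) (rect_rho Q k)"
  unfolding X_subst_def using is_tiling_rect_tiling rect_tiling_legal by blast

section \<open>Bounded displacement equivalence\<close>

definition rect :: "real \<Rightarrow> real \<Rightarrow> real \<Rightarrow> real \<Rightarrow> pt set" where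
  "rect a b c d = {z. a \<le> z$1 \<and> z$1 \<le> b \<and> c \<le> z$2 \<and> z$2 \<le> d}"

definition rows_meeting :: "real \<Rightarrow> real \<Rightarrow> int set" where
  "rows_meeting c d = {y. real_of_int y \<le> d \<and> c \<le> real_of_int y + 1}"

lemma rows_meeting_subset: "rows_meeting c d \<subseteq> {\<lceil>c\<rceil> - 1 .. \<lfloor>d\<rfloor>}"
proof
  fix y assume "y \<in> rows_meeting c d"
  then have "real_of_int y \<le> d" "c \<le> real_of_int (y + 1)"
    unfolding rows_meeting_def by auto
  then show "y \<in> {\<lceil>c\<rceil> - 1 .. \<lfloor>d\<rfloor>}"
    by (simp add: le_floor_iff ceiling_le_iff) linarith
qed

lemma finite_rows_meeting: "finite (rows_meeting c d)"
  using rows_meeting_subset finite_subset by blast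

lemma card_rows_meeting_le:
  assumes "c \<le> d"
  shows "real (card (rows_meeting c d)) \<le> d - c + 2"
proof -
  have "card (rows_meeting c d) \<le> card {\<lceil>c\<rceil> - 1 .. \<lfloor>d\<rfloor>}"
    by (rule card_mono[OF _ rows_meeting_subset]) simp
  then have "real (card (rows_meeting c d)) \<le> real (nat (\<lfloor>d\<rfloor> - \<lceil>c\<rceil> + 2))"
    by simp
  also have "\<dots> = real_of_int (\<lfloor>d\<rfloor> - \<lceil>c\<rceil> + 2)"
  proof -
    have "real_of_int \<lceil>c\<rceil> < real_of_int \<lfloor>d\<rfloor> + 2"
      using ceiling_correct[of c] real_of_int_floor_add_one_gt[of d] assms by linarith
    then have "real_of_int \<lceil>c\<rceil> < real_of_int (\<lfloor>d\<rfloor> + 2)"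
      by simp
    then have "0 \<le> \<lfloor>d\<rfloor> - \<lceil>c\<rceil> + 2"
      by (simp only: of_int_less_iff)
    then show ?thesis
      by simp
  qed
  also have "\<dots> \<le> d - c + 2"
    using of_int_floor_le[of d] le_of_int_ceiling[of c] by simp linarith
  finally show ?thesis .
qed

lemma abs_component_diff_le_norm: "\<bar>(x::pt)$i - y$i\<bar> \<le> norm (x - y)"
  using component_le_norm_cart[of "x - y" i] by simp

lemma card_displaced_points_le:
  assumes \<alpha>: "\<alpha> > 0" and inj: "inj_on \<phi> L" and img: "\<phi> ` L \<subseteq> (\<lambda>x. \<alpha> *\<^sub>R x) ` L'"
    and disp: "\<forall>x\<in>L. norm (x - \<phi> x) \<le> C"
    and fin: "finite (L' \<inter> rect ((a - C) / \<alpha>) ((b + C) / \<alpha>) ((c - C) / \<alpha>) ((d + C) / \<alpha>))"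
  shows "finite (L \<inter> rect a b c d)"
    and "card (L \<inter> rect a b c d) \<le> card (L' \<inter> rect ((a - C) / \<alpha>) ((b + C) / \<alpha>) ((c - C) / \<alpha>) ((d + C) / \<alpha>))"
proof -
  let ?R' = "rect ((a - C) / \<alpha>) ((b + C) / \<alpha>) ((c - C) / \<alpha>) ((d + C) / \<alpha>)"
  have into: "\<phi> ` (L \<inter> rect a b c d) \<subseteq> (\<lambda>x. \<alpha> *\<^sub>R x) ` (L' \<inter> ?R')"
  proof
    fix w assume "w \<in> \<phi> ` (L \<inter> rect a b c d)"
    then obtain x where x: "x \<in> L" "x \<in> rect a b c d" "w = \<phi> x"
      by auto
    obtain y where y: "y \<in> L'" "\<phi> x = \<alpha> *\<^sub>R y"
      using img x(1) by blast
    have "\<bar>x$1 - (\<phi> x)$1\<bar> \<le> C" "\<bar>x$2 - (\<phi> x)$2\<bar> \<le> C"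
      using disp x(1) abs_component_diff_le_norm[where x = x and y = "\<phi> x"] by (meson order_trans)+
    moreover have "(\<phi> x)$1 = \<alpha> * y$1" "(\<phi> x)$2 = \<alpha> * y$2"
      using y(2) by simp_all
    ultimately have "a - C \<le> \<alpha> * y$1" "\<alpha> * y$1 \<le> b + C" "c - C \<le> \<alpha> * y$2" "\<alpha> * y$2 \<le> d + C"
      using x(2) unfolding rect_def by auto
    then have "y \<in> ?R'"
      using \<alpha> unfolding rect_def by (simp add: divide_le_eq le_divide_eq mult.commute)
    then show "w \<in> (\<lambda>x. \<alpha> *\<^sub>R x) ` (L' \<inter> ?R')"
      using x(3) y by blast
  qed
  have fin_img: "finite ((\<lambda>x. \<alpha> *\<^sub>R x) ` (L' \<inter> ?R'))"
    using fin by simp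
  have inj': "inj_on \<phi> (L \<inter> rect a b c d)"
    using inj by (rule inj_on_subset) simp
  show "finite (L \<inter> rect a b c d)"
    using finite_imageD[OF finite_subset[OF into fin_img] inj'] .
  have "card (L \<inter> rect a b c d) \<le> card ((\<lambda>x. \<alpha> *\<^sub>R x) ` (L' \<inter> ?R'))"
    by (rule card_inj_on_le[OF inj' into fin_img])
  also have "\<dots> \<le> card (L' \<inter> ?R')"
    using fin by (rule card_image_le)
  finally show "card (L \<inter> rect a b c d) \<le> card (L' \<inter> ?R')" .
qed

lemma BD_converse:
  fixes L L' :: "'a::real_normed_vector set"
  assumes \<alpha>: "\<alpha> > 0" and bij: "bij_betw \<phi> L ((\<lambda>x. \<alpha> *\<^sub>R x) ` L')" and disp: "\<forall>x\<in>L. norm (x - \<phi> x) \<le> C"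
  shows "bij_betw (\<lambda>y. (1 / \<alpha>) *\<^sub>R inv_into L \<phi> (\<alpha> *\<^sub>R y)) L' ((\<lambda>x. (1 / \<alpha>) *\<^sub>R x) ` L)"
    and "\<forall>y\<in>L'. norm (y - (1 / \<alpha>) *\<^sub>R inv_into L \<phi> (\<alpha> *\<^sub>R y)) \<le> C / \<alpha>"
proof -
  have scale_bij: "bij_betw (\<lambda>x. c *\<^sub>R x) A ((\<lambda>x. c *\<^sub>R x) ` A)" if "c \<noteq> 0" for c and A :: "'a set"
    using that by (intro bij_betw_imageI inj_onI) auto
  have "bij_betw (inv_into L \<phi> \<circ> (\<lambda>y. \<alpha> *\<^sub>R y)) L' L"
    using scale_bij[of \<alpha> L'] bij_betw_inv_into[OF bij] \<alpha> by (intro bij_betw_trans) auto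
  then show "bij_betw (\<lambda>y. (1 / \<alpha>) *\<^sub>R inv_into L \<phi> (\<alpha> *\<^sub>R y)) L' ((\<lambda>x. (1 / \<alpha>) *\<^sub>R x) ` L)"
    using scale_bij[of "1 / \<alpha>" L] \<alpha> bij_betw_trans by (fastforce simp: comp_def)
  show "\<forall>y\<in>L'. norm (y - (1 / \<alpha>) *\<^sub>R inv_into L \<phi> (\<alpha> *\<^sub>R y)) \<le> C / \<alpha>"
  proof
    fix y assume "y \<in> L'"
    define x where "x = inv_into L \<phi> (\<alpha> *\<^sub>R y)"
    have "\<alpha> *\<^sub>R y \<in> \<phi> ` L"
      using bij \<open>y \<in> L'\<close> by (auto simp: bij_betw_def)
    then have x: "x \<in> L" "\<phi> x = \<alpha> *\<^sub>R y"
      unfolding x_def by (auto intro: inv_into_into f_inv_into_f)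
    have "y - (1 / \<alpha>) *\<^sub>R x = (1 / \<alpha>) *\<^sub>R (\<phi> x - x)"
      using \<alpha> x(2) by (simp add: algebra_simps)
    then have "norm (y - (1 / \<alpha>) *\<^sub>R x) = norm (x - \<phi> x) / \<alpha>"
      using \<alpha> by (simp add: norm_minus_commute)
    also have "\<dots> \<le> C / \<alpha>"
      using disp x(1) \<alpha> by (simp add: divide_right_mono)
    finally show "norm (y - (1 / \<alpha>) *\<^sub>R inv_into L \<phi> (\<alpha> *\<^sub>R y)) \<le> C / \<alpha>"
      unfolding x_def .
  qed
qed

lemma le_of_forall_mult_le_add:
  fixes a b K :: real
  assumes "\<And>n::nat. n \<ge> 1 \<Longrightarrow> real n * a \<le> real n * b + K"
  shows "a \<le> b"
proof (rule ccontr)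
  assume "\<not> a \<le> b"
  obtain n :: nat where n: "K / (a - b) < real n"
    using reals_Archimedean2 by blast
  with \<open>\<not> a \<le> b\<close> have "K < real (Suc n) * (a - b)"
    by (simp add: field_simps)
  with assms[of "Suc n"] show False
    by (simp add: algebra_simps)
qed

lemma stacked_within_subset:
  "stacked (tiles_within (line_tiling Q k) a b) {0..<int H} \<subseteq>
    {p\<in>rect_tiling Q k. placed rect_prototiles p \<subseteq> rect a b 0 (real H)}"
proof
  fix p assume "p \<in> stacked (tiles_within (line_tiling Q k) a b) {0..<int H}"
  then obtain s x y where p: "p = (s, vec2 (real_of_int x) (real_of_int y))"
    "(s, x) \<in> tiles_within (line_tiling Q k) a b" "y \<in> {0..<int H}"
    unfolding stacked_def by auto
  have s: "s < 2"
    using p(2) line_tiling_letter unfolding tiles_within_def by auto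
  have "a \<le> real_of_int x" "real_of_int x + real (tile_len s) \<le> b" "(s, x) \<in> line_tiling Q k"
    using p(2) unfolding tiles_within_def by auto
  moreover have "0 \<le> real_of_int y" "real_of_int (y + 1) \<le> real_of_int (int H)"
    using p(3) by (simp_all only: of_int_le_iff) auto
  ultimately show "p \<in> {p\<in>rect_tiling Q k. placed rect_prototiles p \<subseteq> rect a b 0 (real H)}"
    unfolding p(1) rect_def rect_tiling_def stacked_def using mem_placed_rect[OF s] by fastforce
qed

lemma rect_tiling_meeting_subset:
  "{p\<in>rect_tiling Q l. placed rect_prototiles p \<inter> rect a b c d \<noteq> {}} \<subseteq>
    stacked (tiles_meeting (line_tiling Q l) a b) (rows_meeting c d)"
proof
  fix p assume "p \<in> {p\<in>rect_tiling Q l. placed rect_prototiles p \<inter> rect a b c d \<noteq> {}}"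
  then obtain s x y z where p: "p = (s, vec2 (real_of_int x) (real_of_int y))" "(s, x) \<in> line_tiling Q l"
    "z \<in> placed rect_prototiles p" "z \<in> rect a b c d"
    unfolding rect_tiling_def stacked_def by auto
  have s: "s < 2"
    using p(2) line_tiling_letter by auto
  have "real_of_int x \<le> z$1" "z$1 \<le> real_of_int x + real (tile_len s)" "real_of_int y \<le> z$2" "z$2 \<le> real_of_int y + 1"
    using p(3) unfolding p(1) mem_placed_rect[OF s] by auto
  then have "(s, x) \<in> tiles_meeting (line_tiling Q l) a b" "y \<in> rows_meeting c d"
    using p(2,4) unfolding tiles_meeting_def rows_meeting_def rect_def by auto
  then show "p \<in> stacked (tiles_meeting (line_tiling Q l) a b) (rows_meeting c d)"
    unfolding p(1) stacked_def by auto
qed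

lemma card_points_in_rect_ge:
  assumes c: "inj_on c (rect_tiling Q k)" "\<forall>p\<in>rect_tiling Q k. c p \<in> placed rect_prototiles p"
    and fin: "finite (c ` rect_tiling Q k \<inter> rect a b 0 (real H))"
  shows "card (tiles_within (line_tiling Q k) a b) * H \<le> card (c ` rect_tiling Q k \<inter> rect a b 0 (real H))"
proof -
  let ?P = "stacked (tiles_within (line_tiling Q k) a b) {0..<int H}"
  have sub: "?P \<subseteq> rect_tiling Q k"
    using stacked_within_subset by blast
  have "card ?P \<le> card (c ` rect_tiling Q k \<inter> rect a b 0 (real H))"
  proof (rule card_inj_on_le[OF _ _ fin])
    show "inj_on c ?P"
      using c(1) sub by (rule inj_on_subset)
    show "c ` ?P \<subseteq> c ` rect_tiling Q k \<inter> rect a b 0 (real H)"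
      using stacked_within_subset c(2) sub by blast
  qed
  then show ?thesis
    by (simp add: card_stacked)
qed

lemma card_points_in_rect_le:
  assumes l: "l \<le> Q" and c': "\<forall>p\<in>rect_tiling Q l. c' p \<in> placed rect_prototiles p"
  shows "finite (c' ` rect_tiling Q l \<inter> rect a b c d)"
    and "card (c' ` rect_tiling Q l \<inter> rect a b c d) \<le> card (tiles_meeting (line_tiling Q l) a b) * card (rows_meeting c d)"
proof -
  let ?P = "stacked (tiles_meeting (line_tiling Q l) a b) (rows_meeting c d)"
  have fin: "finite ?P"
    by (intro finite_stacked finite_tiles_meeting separated_line_tiling[OF l] finite_rows_meeting)
  have sub: "c' ` rect_tiling Q l \<inter> rect a b c d \<subseteq> c' ` ?P"
    using c' rect_tiling_meeting_subset by blast
  then show "finite (c' ` rect_tiling Q l \<inter> rect a b c d)"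
    using fin by (rule finite_subset[OF _ finite_imageI])
  have "card (c' ` rect_tiling Q l \<inter> rect a b c d) \<le> card (c' ` ?P)"
    using sub fin by (intro card_mono) auto
  also have "\<dots> \<le> card ?P"
    using fin by (rule card_image_le)
  finally show "card (c' ` rect_tiling Q l \<inter> rect a b c d) \<le> card (tiles_meeting (line_tiling Q l) a b) * card (rows_meeting c d)"
    by (simp add: card_stacked)
qed

text \<open>Rectangles of height H \<rightarrow> \<infinity> over a window turn the BD map into an inequality
  between the numbers of tiles in one row.\<close>

lemma BD_count_within_meeting:
  assumes k: "k \<le> Q" and l: "l \<le> Q"
    and L: "associated_delone rect_prototiles (rect_tiling Q k) L"
    and L': "associated_delone rect_prototiles (rect_tiling Q l) L'"
    and \<alpha>: "\<alpha> > 0" and C: "C \<ge> 0"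
    and inj: "inj_on \<phi> L" and img: "\<phi> ` L \<subseteq> (\<lambda>x. \<alpha> *\<^sub>R x) ` L'"
    and disp: "\<forall>x\<in>L. norm (x - \<phi> x) \<le> C"
  shows "\<alpha> * real (card (tiles_within (line_tiling Q k) a b)) \<le>
    real (card (tiles_meeting (line_tiling Q l) ((a - C) / \<alpha>) ((b + C) / \<alpha>)))"
proof -
  obtain c where c: "inj_on c (rect_tiling Q k)" "\<forall>p\<in>rect_tiling Q k. c p \<in> placed rect_prototiles p"
    "L = c ` rect_tiling Q k"
    using L unfolding associated_delone_def by blast
  obtain c' where c': "\<forall>p\<in>rect_tiling Q l. c' p \<in> placed rect_prototiles p" "L' = c' ` rect_tiling Q l"
    using L' unfolding associated_delone_def by blast
  let ?A = "real (card (tiles_within (line_tiling Q k) a b))"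
    and ?B = "real (card (tiles_meeting (line_tiling Q l) ((a - C) / \<alpha>) ((b + C) / \<alpha>)))"
  have "real H * ?A \<le> real H * (?B / \<alpha>) + ?B * (2 * C / \<alpha> + 2)" if "H \<ge> 1" for H :: nat
  proof -
    let ?R' = "rect ((a - C) / \<alpha>) ((b + C) / \<alpha>) ((0 - C) / \<alpha>) ((real H + C) / \<alpha>)"
    note up = card_points_in_rect_le[OF l c'(1), of "(a - C) / \<alpha>" "(b + C) / \<alpha>" "(0 - C) / \<alpha>" "(real H + C) / \<alpha>"]
    note mid = card_displaced_points_le[OF \<alpha> inj img disp, of a b 0 "real H", unfolded c'(2), OF up(1)]
    have "card (tiles_within (line_tiling Q k) a b) * H \<le>
        card (tiles_meeting (line_tiling Q l) ((a - C) / \<alpha>) ((b + C) / \<alpha>)) * card (rows_meeting ((0 - C) / \<alpha>) ((real H + C) / \<alpha>))"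
      using card_points_in_rect_ge[OF c(1,2), of a b H] mid up(2) unfolding c(3) c'(2) by linarith
    moreover have "real (card (rows_meeting ((0 - C) / \<alpha>) ((real H + C) / \<alpha>))) \<le> (real H + 2 * C) / \<alpha> + 2"
      using card_rows_meeting_le[of "(0 - C) / \<alpha>" "(real H + C) / \<alpha>"] C \<alpha>
      by (simp add: divide_right_mono add_divide_distrib diff_divide_distrib)
    ultimately have "real H * ?A \<le> ?B * ((real H + 2 * C) / \<alpha> + 2)"
      by (smt (verit) mult.commute mult_left_mono of_nat_0_le_iff of_nat_mult of_nat_le_iff)
    moreover have "?B * ((real H + 2 * C) / \<alpha> + 2) = real H * (?B / \<alpha>) + ?B * (2 * C / \<alpha> + 2)"
      using \<alpha> by (simp add: field_simps)
    ultimately show ?thesis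
      by linarith
  qed
  then have "?A \<le> ?B / \<alpha>"
    by (rule le_of_forall_mult_le_add)
  then show ?thesis
    using \<alpha> by (simp add: field_simps)
qed

lemma rect_tilings_not_BD_equiv:
  assumes Q: "Q \<ge> 1" and k: "k \<le> Q" and l: "l \<le> Q" and kl: "k \<noteq> l"
    and L: "associated_delone rect_prototiles (rect_tiling Q k) L"
    and L': "associated_delone rect_prototiles (rect_tiling Q l) L'"
  shows "\<not> BD_equiv L L'"
proof
  assume "BD_equiv L L'"
  then obtain \<alpha> \<phi> C where \<alpha>: "\<alpha> > 0" and bij: "bij_betw \<phi> L ((\<lambda>x. \<alpha> *\<^sub>R x) ` L')"
    and disp: "\<forall>x\<in>L. norm (x - \<phi> x) \<le> C"
    unfolding BD_equiv_def by blast
  define C0 where "C0 = max C 0"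
  have C0: "C0 \<ge> 0" and disp0: "\<forall>x\<in>L. norm (x - \<phi> x) \<le> C0"
    using disp by (auto simp: C0_def intro: le_max_iff_disj[THEN iffD2])
  define \<psi> where "\<psi> = (\<lambda>y. (1 / \<alpha>) *\<^sub>R inv_into L \<phi> (\<alpha> *\<^sub>R y))"
  have \<psi>: "bij_betw \<psi> L' ((\<lambda>x. (1 / \<alpha>) *\<^sub>R x) ` L)" "\<forall>y\<in>L'. norm (y - \<psi> y) \<le> C0 / \<alpha>"
    using BD_converse[OF \<alpha> bij disp0] unfolding \<psi>_def by auto
  have "1 / \<alpha> > 0" "C0 / \<alpha> \<ge> 0"
    using \<alpha> C0 by simp_all
  note count_kl = BD_count_within_meeting[OF k l L L' \<alpha> C0 bij_betw_imp_inj_on[OF bij]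
      equalityD1[OF bij_betw_imp_surj_on[OF bij]] disp0]
  note count_lk = BD_count_within_meeting[OF l k L' L \<open>1 / \<alpha> > 0\<close> \<open>C0 / \<alpha> \<ge> 0\<close> bij_betw_imp_inj_on[OF \<psi>(1)]
      equalityD1[OF bij_betw_imp_surj_on[OF \<psi>(1)]] \<psi>(2)]
  have "\<alpha> \<le> 1" "1 / \<alpha> \<le> 1"
    using BD_scale_le_1[OF Q k l C0 \<alpha> count_kl] BD_scale_le_1[OF Q l k \<open>C0 / \<alpha> \<ge> 0\<close> \<open>1 / \<alpha> > 0\<close> count_lk]
    by simp_all
  then have "\<alpha> = 1"
    using \<alpha> by (simp add: field_simps)
  then have up: "(real k - real l) * (real Q + 1) ^ M \<le> 2 * C0 + 6" "(real l - real k) * (real Q + 1) ^ M \<le> 2 * C0 + 6" for M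
    using window_count_difference_bounded[OF k l C0, of M] count_kl[of "window_start Q M" "window_start Q M + window_width Q M"]
      window_count_difference_bounded[OF l k C0, of M] count_lk[of "window_start Q M" "window_start Q M + window_width Q M"]
    by simp_all
  obtain M where M: "2 * C0 + 6 < (real Q + 1) ^ M"
    using real_arch_pow[of "real Q + 1" "2 * C0 + 6"] Q by auto
  have "(real Q + 1) ^ M \<le> \<bar>real k - real l\<bar> * (real Q + 1) ^ M"
    using kl by (simp add: mult_le_cancel_right1)
  also have "\<dots> \<le> 2 * C0 + 6"
    using up[of M] by (cases "real l \<le> real k") (simp_all add: abs_if)
  finally show False
    using M by simp
qed

theorem theorem1p4:
  shows "\<exists>F. prototiles F \<and>
    (\<forall>q::nat. \<exists>(xi :: nat \<Rightarrow> real) (rho :: nat \<Rightarrow> nat \<Rightarrow> (nat \<times> pt) set) (T :: nat \<Rightarrow> (nat \<times> pt) set).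
       (\<forall>k<q. subst_rule F (xi k) (rho k) \<and> primitive F (rho k) \<and> T k \<in> X_subst F (xi k) (rho k)) \<and>
       (\<forall>k<q. \<forall>l<q. \<forall>i<length F. \<forall>j<length F. subst_matrix (rho k) i j = subst_matrix (rho l) i j) \<and>
       (\<forall>k<q. \<forall>l<q. k \<noteq> l \<longrightarrow> (\<forall>L L'. associated_delone F (T k) L \<and> associated_delone F (T l) L' \<longrightarrow>
           \<not> BD_equiv L L')))"
proof (intro exI[of _ rect_prototiles] conjI allI prototiles_rect_prototiles, goal_cases)
  case (1 q)
  have Q: "Suc q \<ge> 1" and kQ: "\<And>k. k < q \<Longrightarrow> k \<le> Suc q"
    by simp_all
  show ?case
  proof (intro exI[of _ "\<lambda>k. real (infl (Suc q))"] exI[of _ "rect_rho (Suc q)"] exI[of _ "rect_tiling (Suc q)"]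
      conjI allI impI)
    fix k assume "k < q"
    then show "subst_rule rect_prototiles (real (infl (Suc q))) (rect_rho (Suc q) k)"
      and "primitive rect_prototiles (rect_rho (Suc q) k)"
      and "rect_tiling (Suc q) k \<in> X_subst rect_prototiles (real (infl (Suc q))) (rect_rho (Suc q) k)"
      using subst_rule_rect_rho primitive_rect_rho[OF Q] rect_tiling_in_X_subst kQ by blast+
  next
    fix k l i j assume "k < q" "l < q" "i < length rect_prototiles" "j < length rect_prototiles"
    then show "subst_matrix (rect_rho (Suc q) k) i j = subst_matrix (rect_rho (Suc q) l) i j"
      using subst_matrix_rect_rho_indep kQ by simp
  next
    fix k l L L' assume "k < q" "l < q" "k \<noteq> l"
      "associated_delone rect_prototiles (rect_tiling (Suc q) k) L \<and> associated_delone rect_prototiles (rect_tiling (Suc q) l) L'"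
    then show "\<not> BD_equiv L L'"
      using rect_tilings_not_BD_equiv[OF Q] kQ by blast
  qed
qed

end
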